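(* There exist positive reals $\gamma_k(\eta,\vartheta,d,n)$, defined for all positive integers $d,n$ with $n\geqslant 4d$, all $0<\eta,\vartheta\leqslant1$ and all $k\in\{1,\dots,\ell\}$ where $\ell\coloneqq\binom{\lfloor n/2\rfloor}{d}$, such that $\gamma_k(\eta,\vartheta,d,n)$ tends to zero as $n$ tends to infinity and $\eta,\vartheta$ tend to zero, and with the following property. Let $d,n$ be positive integers with $n\geqslant 4d$, let $0<\eta,\vartheta\leqslant1$, let $\boldsymbol{\gamma}=(\gamma_k(\eta,\vartheta,d,n))_{k=1}^{\ell}$, let $\mathcal{X}$ be a finite set, let $\mathcal{S}$ be a nonempty subset of $\mathcal{X}$, and let $\boldsymbol{X}$ be an $\mathcal{X}$-valued, $\eta$-spreadable, $d$-dimensional random array on $[n]$. If $\boldsymbol{X}$ is $(\vartheta,\mathcal{S})$-box independent, then $\boldsymbol{X}$ is $(\boldsymbol{\gamma},\mathcal{S})$-independent.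
   Context: $[n]=\{1,\dots,n\}$, $\binom{I}{d}$ is the set of $d$-element subsets of $I$. A $d$-dimensional random array on $[n]$ is a process $\boldsymbol{X}=\langle X_s:s\in\binom{[n]}{d}\rangle$; $\boldsymbol{X}_J=\langle X_s:s\in\binom{J}{d}\rangle$. $\boldsymbol{X}$ is $\eta$-spreadable if for all $J,K\subseteq[n]$ with $|J|=|K|\geqslant d$ the laws of $\boldsymbol{X}_J,\boldsymbol{X}_K$ (identified via the increasing bijection $J\to K$) are at total variation distance at most $\eta$. A $d$-dimensional box of $[n]$ is a set $\{s\in\binom{[n]}{d}:|s\cap H_i|=1\ \forall i\in[d]\}$ where $H_1,\dots,H_d$ are 2-element subsets of $[n]$ with $\max(H_i)<\min(H_{i+1})$. $\boldsymbol{X}$ is $(\vartheta,\mathcal{S})$-box independent if for every $d$-dimensional box $B$ of $[n]$ and every $a\in\mathcal{S}$, $\mathbb{P}(\bigcap_{s\in B}[X_s=a])\leqslant\prod_{s\in B}\mathbb{P}([X_s=a])+\vartheta$. For $\boldsymbol{\gamma}=(\gamma_k)_{k=1}^\ell$, $\boldsymbol{X}$ is $(\boldsymbol{\gamma},\mathcal{S})$-independent if for every nonempty $\mathcal{F}\subseteq\binom{[n]}{d}$ with $|\bigcup\mathcal{F}|\leqslant n/2$ and every family $(a_s)_{s\in\mathcal{F}}$ of elements of $\mathcal{S}$, $|\mathbb{P}(\bigcap_{s\in\mathcal{F}}[X_s=a_s])-\prod_{s\in\mathcal{F}}\mathbb{P}([X_s=a_s])|\leqslant\gamma_{|\mathcal{F}|}$.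 *)

theory Defs
  imports "HOL-Probability.Probability"
begin

text \<open>A d-dimensional random array on [n] with values in a set of naturals is represented
by its law: a pmf on functions (nat set \<Rightarrow> nat); only the values on d-subsets of {1..n}
are relevant.\<close>

definition dsets :: "nat set \<Rightarrow> nat \<Rightarrow> nat set set" where
  "dsets I d = {s. s \<subseteq> I \<and> card s = d}"

text \<open>Law of the subarray X_J, re-indexed on {0..<card J} via the increasing bijection.\<close>
definition subarray_law :: "nat \<Rightarrow> nat set \<Rightarrow> (nat set \<Rightarrow> 'x) pmf \<Rightarrow> (nat set \<Rightarrow> 'x) pmf" where
  "subarray_law d J p = map_pmf
     (\<lambda>f t. if t \<in> dsets {..<card J} d then f ((\<lambda>i. sorted_list_of_set J ! i) ` t) else undefined) p"

definition tv_dist :: "'a pmf \<Rightarrow> 'a pmf \<Rightarrow> real" where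
  "tv_dist p q = (SUP A. \<bar>measure_pmf.prob p A - measure_pmf.prob q A\<bar>)"

definition array_valued :: "nat \<Rightarrow> nat \<Rightarrow> (nat set \<Rightarrow> 'x) pmf \<Rightarrow> 'x set \<Rightarrow> bool" where
  "array_valued d n p \<X> \<longleftrightarrow> (\<forall>f\<in>set_pmf p. \<forall>s\<in>dsets {1..n} d. f s \<in> \<X>)"

definition spreadable :: "real \<Rightarrow> nat \<Rightarrow> nat \<Rightarrow> (nat set \<Rightarrow> 'x) pmf \<Rightarrow> bool" where
  "spreadable \<eta> d n p \<longleftrightarrow>
     (\<forall>J K. J \<subseteq> {1..n} \<longrightarrow> K \<subseteq> {1..n} \<longrightarrow> card J = card K \<longrightarrow> d \<le> card J \<longrightarrow>
        tv_dist (subarray_law d J p) (subarray_law d K p) \<le> \<eta>)"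

definition is_box :: "nat \<Rightarrow> nat \<Rightarrow> nat set set \<Rightarrow> bool" where
  "is_box d n B \<longleftrightarrow> (\<exists>H :: nat \<Rightarrow> nat set.
     (\<forall>i\<in>{1..d}. H i \<subseteq> {1..n} \<and> card (H i) = 2) \<and>
     (\<forall>i\<in>{1..<d}. Max (H i) < Min (H (Suc i))) \<and>
     B = {s \<in> dsets {1..n} d. \<forall>i\<in>{1..d}. card (s \<inter> H i) = 1})"

definition box_independent :: "real \<Rightarrow> 'x set \<Rightarrow> nat \<Rightarrow> nat \<Rightarrow> (nat set \<Rightarrow> 'x) pmf \<Rightarrow> bool" where
  "box_independent \<theta> S d n p \<longleftrightarrow>
     (\<forall>B. is_box d n B \<longrightarrow> (\<forall>a\<in>S.
        measure_pmf.prob p (\<Inter>s\<in>B. {f. f s = a})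
          \<le> (\<Prod>s\<in>B. measure_pmf.prob p {f. f s = a}) + \<theta>))"

definition gamma_independent :: "(nat \<Rightarrow> real) \<Rightarrow> 'x set \<Rightarrow> nat \<Rightarrow> nat \<Rightarrow> (nat set \<Rightarrow> 'x) pmf \<Rightarrow> bool" where
  "gamma_independent \<gamma> S d n p \<longleftrightarrow>
     (\<forall>F. F \<noteq> {} \<longrightarrow> F \<subseteq> dsets {1..n} d \<longrightarrow> real (card (\<Union>F)) \<le> real n / 2 \<longrightarrow>
       (\<forall>a :: nat set \<Rightarrow> 'x. (\<forall>s\<in>F. a s \<in> S) \<longrightarrow>
          \<bar>measure_pmf.prob p (\<Inter>s\<in>F. {f. f s = a s})
            - (\<Prod>s\<in>F. measure_pmf.prob p {f. f s = a s})\<bar> \<le> \<gamma> (card F)))"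

end

theory Submission
  imports Defs
begin

text \<open>By telescoping over \<open>F\<close>, it suffices to show that for \<open>s \<in> F\<close> and \<open>F' \<subseteq> F - {s}\<close> the
  event \<open>X\<^sub>s = a\<^sub>s\<close> is almost uncorrelated with the events \<open>X\<^sub>t = a\<^sub>t\<close>, \<open>t \<in> F'\<close>. Give each point of
  \<open>V = \<Union>F\<close> a block of \<open>L = n div card V \<ge> 2\<close> consecutive integers and embed \<open>V\<close> increasingly and at
  random, sending each point of \<open>s\<close> to a uniform point of its block; by spreadability this moves
  every probability by at most \<open>\<eta>\<close>. After the embedding each \<open>t \<in> F'\<close> ignores one coordinate
  of \<open>s\<close>, and \<open>d\<close> rounds of Cauchy--Schwarz, one per coordinate of \<open>s\<close>, bound the correlation in
  terms of how far the probability of the pattern \<open>a\<^sub>s\<close> on a random box exceeds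
  \<open>P(X\<^sub>s = a\<^sub>s) ^ 2 ^ d\<close>. Box independence, spreadability and the collision probability \<open>1 / L\<close>
  make this excess small.\<close>

section \<open>Averages and elementary estimates\<close>

lemma sum_PiE_resample:
  fixes F :: "('a \<Rightarrow> 'b) \<Rightarrow> real"
  assumes "finite K" "j \<in> K" "\<forall>i\<in>K. finite (W i)"
  shows "(\<Sum>w\<in>PiE K W. F w) * real (card (W j)) = (\<Sum>w\<in>PiE K W. \<Sum>x\<in>W j. F (w(j := x)))"
proof -
  define K0 where "K0 = K - {j}"
  have K: "K = insert j K0" "j \<notin> K0" using assms(2) by (auto simp: K0_def)
  have split: "(\<Sum>w\<in>PiE K W. H w) = (\<Sum>y\<in>W j. \<Sum>g\<in>PiE K0 W. H (g(j := y)))"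
    for H :: "('a \<Rightarrow> 'b) \<Rightarrow> real"
  proof -
    have "(\<Sum>w\<in>PiE K W. H w) = (\<Sum>w\<in>(\<lambda>(y, g). g(j := y)) ` (W j \<times> PiE K0 W). H w)"
      by (simp add: K PiE_insert_eq)
    also have "\<dots> = (\<Sum>yg\<in>W j \<times> PiE K0 W. H ((\<lambda>(y, g). g(j := y)) yg))"
      by (rule sum.reindex[unfolded comp_def], rule inj_combinator, rule K(2))
    also have "\<dots> = (\<Sum>y\<in>W j. \<Sum>g\<in>PiE K0 W. H (g(j := y)))"
      by (simp add: sum.cartesian_product split_def)
    finally show ?thesis .
  qed
  have "(\<Sum>w\<in>PiE K W. \<Sum>x\<in>W j. F (w(j := x)))
      = (\<Sum>y\<in>W j. \<Sum>g\<in>PiE K0 W. \<Sum>x\<in>W j. F (g(j := x)))"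
    using split[of "\<lambda>w. \<Sum>x\<in>W j. F (w(j := x))"] by simp
  also have "\<dots> = real (card (W j)) * (\<Sum>g\<in>PiE K0 W. \<Sum>x\<in>W j. F (g(j := x)))"
    by simp
  also have "(\<Sum>g\<in>PiE K0 W. \<Sum>x\<in>W j. F (g(j := x))) = (\<Sum>w\<in>PiE K W. F w)"
    by (subst sum.swap) (simp add: split[of F])
  finally show ?thesis by (metis mult.commute)
qed

lemma sum_PiE_resample_average:
  fixes F :: "('a \<Rightarrow> 'b) \<Rightarrow> real"
  assumes "finite K" "j \<in> K" "\<forall>i\<in>K. finite (W i)" "W j \<noteq> {}"
  shows "(\<Sum>w\<in>PiE K W. F w) = (\<Sum>w\<in>PiE K W. (\<Sum>x\<in>W j. F (w(j := x))) / real (card (W j)))"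
proof -
  have "real (card (W j)) > 0" using assms by (simp add: card_gt_0_iff)
  then show ?thesis
    using sum_PiE_resample[OF assms(1-3), of F] by (simp add: sum_divide_distrib[symmetric] field_simps)
qed

lemma weighted_mean_square_le:
  fixes x P :: "'a \<Rightarrow> real"
  assumes "finite A" "\<forall>a\<in>A. 0 \<le> P a" "sum P A \<le> 1"
  shows "(\<Sum>a\<in>A. P a * x a)^2 \<le> (\<Sum>a\<in>A. P a * (x a)^2)"
proof -
  define m where "m = (\<Sum>a\<in>A. P a * x a)"
  have "0 \<le> (\<Sum>a\<in>A. P a * (x a - m)^2)" using assms by (intro sum_nonneg) auto
  also have "\<dots> = (\<Sum>a\<in>A. P a * (x a)^2 - 2 * m * (P a * x a) + m^2 * P a)"
    by (intro sum.cong) (auto simp: power2_eq_square algebra_simps)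
  also have "\<dots> = (\<Sum>a\<in>A. P a * (x a)^2) - 2 * m * m + m^2 * sum P A"
    by (simp add: sum.distrib sum_subtractf sum_distrib_left m_def)
  also have "\<dots> \<le> (\<Sum>a\<in>A. P a * (x a)^2) - m^2"
    using mult_left_le[OF assms(3), of "m^2"] by (simp add: power2_eq_square)
  finally show ?thesis by (simp add: m_def)
qed

lemma mean_square_le:
  fixes x :: "'a \<Rightarrow> real"
  assumes "finite G" "G \<noteq> {}"
  shows "((\<Sum>w\<in>G. x w) / real (card G))^2 \<le> (\<Sum>w\<in>G. (x w)^2) / real (card G)"
proof -
  have c: "real (card G) > 0" using assms by (simp add: card_gt_0_iff)
  have "(\<Sum>w\<in>G. (1 / real (card G)) * x w)^2 \<le> (\<Sum>w\<in>G. (1 / real (card G)) * (x w)^2)"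
    by (rule weighted_mean_square_le) (use assms c in auto)
  then show ?thesis by (simp add: sum_divide_distrib[symmetric] sum_distrib_left[symmetric])
qed

lemma abs_mean_diff_le:
  fixes g :: "'a \<Rightarrow> real"
  assumes "finite G" "G \<noteq> {}" "\<And>w. w \<in> G \<Longrightarrow> \<bar>g w - c\<bar> \<le> e"
  shows "\<bar>(\<Sum>w\<in>G. g w) / real (card G) - c\<bar> \<le> e"
proof -
  have cG: "real (card G) > 0" using assms by (simp add: card_gt_0_iff)
  have "\<bar>\<Sum>w\<in>G. g w - c\<bar> \<le> (\<Sum>w\<in>G. e)"
    using sum_abs[of "\<lambda>w. g w - c" G] sum_mono[of G "\<lambda>w. \<bar>g w - c\<bar>", OF assms(3)] by linarith
  moreover have "(\<Sum>w\<in>G. g w) / real (card G) - c = (\<Sum>w\<in>G. g w - c) / real (card G)"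
    using cG by (simp add: sum_subtractf field_simps)
  ultimately show ?thesis using cG by (simp add: abs_divide pos_divide_le_eq mult.commute)
qed

lemma power_diff_le_mult_diff:
  fixes x y :: real
  assumes "0 \<le> x" "x \<le> y" "y \<le> 1"
  shows "y ^ N - x ^ N \<le> real N * (y - x)"
proof (induction N)
  case 0
  then show ?case by simp
next
  case (Suc N)
  have "y ^ Suc N - x ^ Suc N = y * (y ^ N - x ^ N) + x ^ N * (y - x)"
    by (simp add: algebra_simps)
  also have "\<dots> \<le> 1 * (real N * (y - x)) + 1 * (y - x)"
    using assms Suc.IH by (intro add_mono mult_mono power_le_one) (auto simp: power_mono)
  finally show ?case by (simp add: algebra_simps)
qed

lemma prod_le_power_add:
  fixes x :: "'a \<Rightarrow> real"
  assumes "\<forall>t\<in>B. 0 \<le> x t \<and> x t \<le> 1 \<and> x t \<le> r + \<eta>" "0 \<le> r" "r \<le> 1" "0 \<le> \<eta>"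
  shows "(\<Prod>t\<in>B. x t) \<le> r ^ card B + real (card B) * \<eta>"
proof -
  define q where "q = min 1 (r + \<eta>)"
  have q: "r \<le> q" "q \<le> 1" "q - r \<le> \<eta>" using assms(2-4) by (auto simp: q_def)
  have "(\<Prod>t\<in>B. x t) \<le> (\<Prod>t\<in>B. q)" using assms(1) by (intro prod_mono) (auto simp: q_def)
  also have "\<dots> \<le> q ^ card B" by (cases "finite B") simp_all
  also have "\<dots> \<le> r ^ card B + real (card B) * (q - r)"
    using power_diff_le_mult_diff[of r q "card B"] q assms(2) by simp
  also have "\<dots> \<le> r ^ card B + real (card B) * \<eta>" using q(3) by (simp add: mult_left_mono)
  finally show ?thesis .
qed

lemma prod_indicator:
  "finite A \<Longrightarrow> (\<Prod>x\<in>A. if Q x then 1 else 0 :: real) = (if \<forall>x\<in>A. Q x then 1 else 0)"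
  by (induction A rule: finite_induct) auto

lemma square_lower_bound:
  fixes x r e :: real
  assumes "0 \<le> x" "r - e \<le> x" "0 \<le> r" "r \<le> 1" "0 \<le> e"
  shows "r^2 - 2 * e \<le> x^2"
proof (cases "0 \<le> r - e")
  case True
  then have "(r - e)^2 \<le> x^2" using assms by (intro power_mono) auto
  moreover have "r * e \<le> e" using assms mult_right_mono[of r 1 e] by simp
  moreover have "(r - e)^2 = r^2 - 2 * (r * e) + e^2" by (simp add: power2_eq_square algebra_simps)
  ultimately show ?thesis using zero_le_power2[of e] by linarith
next
  case False
  then have "r^2 \<le> e" using assms mult_right_mono[of r 1 r] by (simp add: power2_eq_square)
  then show ?thesis using assms zero_le_power2[of x] by linarith
qed

lemma le_add_sqrt_if_square_le:
  fixes x y e :: real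
  assumes "x^2 \<le> y^2 + e" "0 \<le> y" "0 \<le> e"
  shows "x \<le> y + sqrt e"
proof -
  have "x \<le> sqrt (y^2 + e)" using assms(1) by (rule real_le_rsqrt)
  also have "\<dots> \<le> sqrt (y^2) + sqrt e" by (rule sqrt_add_le_add_sqrt) (use assms in auto)
  finally show ?thesis using assms(2) by simp
qed

lemma sum_pmf_indicator:
  assumes "finite (set_pmf q)"
  shows "(\<Sum>\<omega>\<in>set_pmf q. pmf q \<omega> * (if Q \<omega> then 1 else 0)) = measure_pmf.prob q {\<omega>. Q \<omega>}"
proof -
  have "(\<Sum>\<omega>\<in>set_pmf q. pmf q \<omega> * (if Q \<omega> then 1 else 0)) = sum (pmf q) {\<omega> \<in> set_pmf q. Q \<omega>}"
    using assms by (simp add: sum.inter_filter if_distrib cong: if_cong)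
  also have "\<dots> = measure_pmf.prob q ({\<omega>. Q \<omega>} \<inter> set_pmf q)"
    using assms by (simp add: measure_measure_pmf_finite Int_commute Collect_conj_eq)
  also have "\<dots> = measure_pmf.prob q {\<omega>. Q \<omega>}" by (rule measure_Int_set_pmf)
  finally show ?thesis .
qed

lemma prob_Inter_prod_telescope:
  fixes p :: "'a pmf" and A :: "'b \<Rightarrow> 'a set"
  assumes "finite F"
    and step: "\<And>s F'. s \<in> F \<Longrightarrow> F' \<subseteq> F - {s} \<Longrightarrow>
      \<bar>measure_pmf.prob p (A s \<inter> (\<Inter>t\<in>F'. A t)) - measure_pmf.prob p (A s) * measure_pmf.prob p (\<Inter>t\<in>F'. A t)\<bar> \<le> \<kappa>"
  shows "\<bar>measure_pmf.prob p (\<Inter>t\<in>F. A t) - (\<Prod>t\<in>F. measure_pmf.prob p (A t))\<bar> \<le> real (card F) * \<kappa>"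
  using assms(1) subset_refl
proof (induction F rule: finite_subset_induct')
  case empty
  then show ?case by simp
next
  case (insert s F')
  let ?P = "measure_pmf.prob p"
  have step_s: "\<bar>?P (A s \<inter> (\<Inter>t\<in>F'. A t)) - ?P (A s) * ?P (\<Inter>t\<in>F'. A t)\<bar> \<le> \<kappa>"
    using step[of s F'] insert by auto
  have "\<bar>?P (A s) * (?P (\<Inter>t\<in>F'. A t) - (\<Prod>t\<in>F'. ?P (A t)))\<bar> \<le> 1 * (real (card F') * \<kappa>)"
    unfolding abs_mult using insert.IH by (intro mult_mono) (auto simp: measure_pmf.prob_le_1)
  then have "\<bar>?P (A s \<inter> (\<Inter>t\<in>F'. A t)) - ?P (A s) * (\<Prod>t\<in>F'. ?P (A t))\<bar> \<le> \<kappa> + real (card F') * \<kappa>"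
    using step_s by (simp add: abs_le_iff algebra_simps)
  then show ?case using insert.hyps by (simp add: algebra_simps)
qed

lemma abs_prob_Inter_diff_prod_le_1:
  "\<bar>measure_pmf.prob p (\<Inter>t\<in>F. A t) - (\<Prod>t\<in>F. measure_pmf.prob p (A t))\<bar> \<le> 1"
proof -
  have "0 \<le> measure_pmf.prob p (\<Inter>t\<in>F. A t)" "measure_pmf.prob p (\<Inter>t\<in>F. A t) \<le> 1"
    "0 \<le> (\<Prod>t\<in>F. measure_pmf.prob p (A t))" "(\<Prod>t\<in>F. measure_pmf.prob p (A t)) \<le> 1"
    by (auto intro: prod_nonneg prod_le_1 simp: measure_pmf.prob_le_1)
  then show ?thesis by linarith
qed

definition joint_mean :: "'o set \<Rightarrow> ('o \<Rightarrow> real) \<Rightarrow> 'g set \<Rightarrow> ('o \<Rightarrow> 'g \<Rightarrow> real) \<Rightarrow> real" where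
  "joint_mean \<Omega> P G F = (\<Sum>\<omega>\<in>\<Omega>. P \<omega> * (\<Sum>w\<in>G. F \<omega> w)) / real (card G)"

locale joint_mean_space =
  fixes \<Omega> :: "'o set" and P :: "'o \<Rightarrow> real" and G :: "'g set"
  assumes finite_\<Omega>: "finite \<Omega>" and P_nonneg: "\<forall>\<omega>\<in>\<Omega>. 0 \<le> P \<omega>" and sum_P: "sum P \<Omega> = 1"
    and finite_G: "finite G" and G_ne: "G \<noteq> {}"
begin

abbreviation E where "E \<equiv> joint_mean \<Omega> P G"

lemma card_G_pos: "real (card G) > 0"
  using finite_G G_ne by (simp add: card_gt_0_iff)

lemma joint_mean_mono: "(\<And>\<omega> w. \<omega> \<in> \<Omega> \<Longrightarrow> w \<in> G \<Longrightarrow> F \<omega> w \<le> H \<omega> w) \<Longrightarrow> E F \<le> E H"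
  unfolding joint_mean_def using card_G_pos P_nonneg
  by (intro divide_right_mono sum_mono mult_left_mono) auto

lemma joint_mean_diff: "E (\<lambda>\<omega> w. F \<omega> w - H \<omega> w) = E F - E H"
  unfolding joint_mean_def by (simp add: sum_subtractf right_diff_distrib diff_divide_distrib)

lemma joint_mean_cmult: "E (\<lambda>\<omega> w. c * F \<omega> w) = c * E F"
  unfolding joint_mean_def by (simp add: sum_distrib_left[symmetric] algebra_simps)

lemma joint_mean_const: "E (\<lambda>\<omega> w. c) = c"
  unfolding joint_mean_def using card_G_pos sum_P by (simp add: sum_distrib_right[symmetric])

lemma joint_mean_nonneg: "(\<And>\<omega> w. 0 \<le> F \<omega> w) \<Longrightarrow> 0 \<le> E F"
  using joint_mean_mono[of "\<lambda>\<omega> w. 0" F] joint_mean_const[of 0] by simp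

lemma joint_mean_square_le: "(E F)^2 \<le> E (\<lambda>\<omega> w. (F \<omega> w)^2)"
proof -
  have mean: "E H = (\<Sum>\<omega>\<in>\<Omega>. P \<omega> * ((\<Sum>w\<in>G. H \<omega> w) / real (card G)))" for H
    unfolding joint_mean_def by (subst sum_divide_distrib) (simp only: times_divide_eq_right)
  have "(E F)^2 \<le> (\<Sum>\<omega>\<in>\<Omega>. P \<omega> * ((\<Sum>w\<in>G. F \<omega> w) / real (card G))^2)"
    unfolding mean by (rule weighted_mean_square_le) (use finite_\<Omega> P_nonneg sum_P in auto)
  also have "\<dots> \<le> (\<Sum>\<omega>\<in>\<Omega>. P \<omega> * ((\<Sum>w\<in>G. (F \<omega> w)^2) / real (card G)))"
    using P_nonneg by (intro sum_mono mult_left_mono mean_square_le finite_G G_ne) auto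
  finally show ?thesis unfolding mean .
qed

end

section \<open>Box products and the Cauchy--Schwarz induction\<close>

definition ignores :: "('o \<Rightarrow> ('a \<Rightarrow> 'b) \<Rightarrow> real) \<Rightarrow> 'a \<Rightarrow> bool" where
  "ignores F j \<longleftrightarrow> (\<forall>\<omega> w x. F \<omega> (w(j := x)) = F \<omega> w)"

text \<open>Coordinate \<open>j + D\<close> serves as an independent copy of coordinate \<open>j\<close>.\<close>

definition take_copies :: "nat \<Rightarrow> nat set \<Rightarrow> (nat \<Rightarrow> 'b) \<Rightarrow> nat \<Rightarrow> 'b" where
  "take_copies D T w = (\<lambda>j. if j \<in> T then w (j + D) else w j)"

definition box_prod :: "nat \<Rightarrow> nat set \<Rightarrow> ('o \<Rightarrow> (nat \<Rightarrow> 'b) \<Rightarrow> real) \<Rightarrow> 'o \<Rightarrow> (nat \<Rightarrow> 'b) \<Rightarrow> real" where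
  "box_prod D I Z = (\<lambda>\<omega> w. \<Prod>T\<in>Pow I. Z \<omega> (take_copies D T w))"

lemma ignores_mult: "ignores F j \<Longrightarrow> ignores H j \<Longrightarrow> ignores (\<lambda>\<omega> w. F \<omega> w * H \<omega> w) j"
  by (simp add: ignores_def)

lemma ignores_prod: "(\<And>i. i \<in> A \<Longrightarrow> ignores (f i) j) \<Longrightarrow> ignores (\<lambda>\<omega> w. \<Prod>i\<in>A. f i \<omega> w) j"
  by (simp add: ignores_def)

lemma ignores_diff_const: "ignores F j \<Longrightarrow> ignores (\<lambda>\<omega> w. F \<omega> w - r) j"
  by (simp add: ignores_def)

lemma ignores_const: "ignores (\<lambda>\<omega> w. c) j"
  by (simp add: ignores_def)

lemma take_copies_singleton: "take_copies D {d} w = w(d := w (d + D))"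
  unfolding take_copies_def by (rule ext) simp

lemma take_copies_upd:
  "k \<notin> T \<Longrightarrow> (\<forall>j\<in>T. j + D \<noteq> k) \<Longrightarrow> take_copies D T (w(k := x)) = (take_copies D T w)(k := x)"
  unfolding take_copies_def by (rule ext) auto

lemma ignores_take_copies:
  "ignores F k \<Longrightarrow> k \<notin> T \<Longrightarrow> (\<forall>j\<in>T. j + D \<noteq> k) \<Longrightarrow> ignores (\<lambda>\<omega> w. F \<omega> (take_copies D T w)) k"
  by (simp add: ignores_def take_copies_upd)

lemma ignores_mult_take_copy:
  "ignores F k \<Longrightarrow> k \<noteq> d \<Longrightarrow> k \<noteq> d + D \<Longrightarrow>
    ignores (\<lambda>\<omega> w. F \<omega> w * F \<omega> (take_copies D {d} w)) k"
  by (intro ignores_mult ignores_take_copies) auto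

lemma box_prod_empty: "box_prod D {} Z = Z"
  unfolding box_prod_def take_copies_def by simp

lemma box_prod_insert:
  assumes "finite I" "d \<notin> I"
  shows "box_prod D (insert d I) Z \<omega> w
    = (\<Prod>T\<in>Pow I. Z \<omega> (take_copies D T w)) * (\<Prod>T\<in>Pow I. Z \<omega> (take_copies D (insert d T) w))"
proof -
  have inj: "inj_on (insert d) (Pow I)" using assms(2) by (auto simp: inj_on_def)
  have "box_prod D (insert d I) Z \<omega> w = (\<Prod>T\<in>Pow I \<union> insert d ` Pow I. Z \<omega> (take_copies D T w))"
    unfolding box_prod_def Pow_insert ..
  also have "\<dots> = (\<Prod>T\<in>Pow I. Z \<omega> (take_copies D T w)) * (\<Prod>T\<in>insert d ` Pow I. Z \<omega> (take_copies D T w))"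
    by (rule prod.union_disjoint) (use assms in auto)
  also have "(\<Prod>T\<in>insert d ` Pow I. Z \<omega> (take_copies D T w)) = (\<Prod>T\<in>Pow I. Z \<omega> (take_copies D (insert d T) w))"
    by (subst prod.reindex[OF inj]) simp
  finally show ?thesis .
qed

lemma box_prod_insert_inner:
  assumes "finite I" "d \<notin> I" "\<forall>j\<in>insert d I. j < D"
  shows "box_prod D (insert d I) Z \<omega> w = box_prod D I (\<lambda>\<omega> w. Z \<omega> w * Z \<omega> (take_copies D {d} w)) \<omega> w"
proof -
  have "\<forall>T\<in>Pow I. take_copies D {d} (take_copies D T w) = take_copies D (insert d T) w"
    unfolding take_copies_def using assms by (intro ballI ext) auto
  then show ?thesis
    unfolding box_prod_insert[OF assms(1,2)] unfolding box_prod_def by (simp add: prod.distrib)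
qed

lemma box_prod_insert_outer:
  assumes "finite I" "d \<notin> I" "\<forall>j\<in>insert d I. j < D"
  shows "box_prod D (insert d I) Z \<omega> w = box_prod D I Z \<omega> w * box_prod D I Z \<omega> (take_copies D {d} w)"
proof -
  have "\<forall>T\<in>Pow I. take_copies D T (take_copies D {d} w) = take_copies D (insert d T) w"
    unfolding take_copies_def using assms by (intro ballI ext) auto
  then show ?thesis
    unfolding box_prod_insert[OF assms(1,2)] unfolding box_prod_def by simp
qed

lemma ignores_box_prod:
  assumes "ignores Z k" "\<forall>T\<in>Pow I. k \<notin> T \<and> (\<forall>j\<in>T. j + D \<noteq> k)"
  shows "ignores (box_prod D I Z) k"
  unfolding box_prod_def by (rule ignores_prod, rule ignores_take_copies) (use assms in auto)

lemma sum_PiE_copy_eq_sum_square: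
  fixes y :: "('a \<Rightarrow> 'b) \<Rightarrow> real"
  assumes fin: "finite K" "\<forall>i\<in>K. finite (W i) \<and> W i \<noteq> {}"
    and de: "d \<in> K" "e \<in> K" "W e = W d" "d \<noteq> e"
    and y_e: "\<And>w x. y (w(e := x)) = y w"
  shows "(\<Sum>w\<in>PiE K W. y w * y (w(d := w e)))
    = (\<Sum>w\<in>PiE K W. ((\<Sum>x\<in>W d. y (w(d := x))) / real (card (W d)))^2)"
proof -
  define g where "g w = (\<Sum>x\<in>W d. y (w(d := x))) / real (card (W d))" for w
  have fW: "\<forall>i\<in>K. finite (W i)" and neW: "W d \<noteq> {}" "W e \<noteq> {}" using fin de by auto
  have g_upd: "g (w(e := x)) = g w" for w x
    unfolding g_def using de(4) y_e by (simp add: fun_upd_twist)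
  have sum_g: "(\<Sum>x\<in>W d. y (w(d := x))) = g w * real (card (W d))" for w
    using neW fin de by (simp add: g_def)
  have "(\<Sum>w\<in>PiE K W. y w * y (w(d := w e)))
      = (\<Sum>w\<in>PiE K W. (\<Sum>x\<in>W d. y (w(d := x)) * y ((w(d := x))(d := (w(d := x)) e))) / real (card (W d)))"
    by (rule sum_PiE_resample_average[OF fin(1) de(1) fW neW(1)])
  also have "\<dots> = (\<Sum>w\<in>PiE K W. g w * y (w(d := w e)))"
    using de(4) by (intro sum.cong refl) (simp add: g_def sum_distrib_right)
  also have "\<dots> = (\<Sum>w\<in>PiE K W. (\<Sum>x\<in>W e. g (w(e := x)) * y ((w(e := x))(d := (w(e := x)) e))) / real (card (W e)))"
    by (rule sum_PiE_resample_average[OF fin(1) de(2) fW neW(2)])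
  also have "\<dots> = (\<Sum>w\<in>PiE K W. (g w)^2)"
  proof (intro sum.cong refl)
    fix w
    have "(\<Sum>x\<in>W e. g (w(e := x)) * y ((w(e := x))(d := (w(e := x)) e))) = g w * (\<Sum>x\<in>W d. y (w(d := x)))"
      using de(3,4) y_e by (simp add: g_upd fun_upd_twist sum_distrib_left)
    moreover have "real (card (W d)) \<noteq> 0" using neW fin de by auto
    ultimately show "(\<Sum>x\<in>W e. g (w(e := x)) * y ((w(e := x))(d := (w(e := x)) e))) / real (card (W e)) = (g w)^2"
      using de(3) by (simp add: sum_g power2_eq_square)
  qed
  finally show ?thesis by (simp add: g_def)
qed

locale doubled_grid = joint_mean_space \<Omega> P "PiE K W"
  for \<Omega> :: "'o set" and P and K :: "nat set" and W :: "nat \<Rightarrow> 'b set" +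
  fixes D :: nat
  assumes finite_K: "finite K" and finite_W: "\<forall>i\<in>K. finite (W i) \<and> W i \<noteq> {}" and D_pos: "0 < D"
begin

text \<open>Cauchy--Schwarz in the coordinate \<open>d\<close>, which \<open>b\<close> does not see: the right-hand side is
  the mean square of the average of \<open>Y\<close> over that coordinate.\<close>

lemma cauchy_schwarz_take_copy:
  assumes d: "d \<in> K" "d + D \<in> K" "W (d + D) = W d"
    and b: "ignores b d" "\<forall>\<omega> w. 0 \<le> b \<omega> w \<and> b \<omega> w \<le> 1" and Y: "ignores Y (d + D)"
  shows "(E (\<lambda>\<omega> w. b \<omega> w * Y \<omega> w))^2 \<le> E (\<lambda>\<omega> w. Y \<omega> w * Y \<omega> (take_copies D {d} w))"
proof -
  define g where "g \<omega> w = (\<Sum>x\<in>W d. Y \<omega> (w(d := x))) / real (card (W d))" for \<omega> w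
  have fW: "\<forall>i\<in>K. finite (W i)" and neW: "W d \<noteq> {}" using finite_W d by auto
  have "(\<Sum>w\<in>PiE K W. b \<omega> w * Y \<omega> w)
      = (\<Sum>w\<in>PiE K W. (\<Sum>x\<in>W d. b \<omega> (w(d := x)) * Y \<omega> (w(d := x))) / real (card (W d)))" for \<omega>
    by (rule sum_PiE_resample_average[OF finite_K d(1) fW neW])
  also have "\<dots> \<omega> = (\<Sum>w\<in>PiE K W. b \<omega> w * g \<omega> w)" for \<omega>
    using b(1) unfolding ignores_def by (simp add: g_def sum_distrib_left)
  finally have "(E (\<lambda>\<omega> w. b \<omega> w * Y \<omega> w))^2 = (E (\<lambda>\<omega> w. b \<omega> w * g \<omega> w))^2"
    unfolding joint_mean_def by simp
  also have "\<dots> \<le> E (\<lambda>\<omega> w. (b \<omega> w * g \<omega> w)^2)"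
    by (rule joint_mean_square_le)
  also have "\<dots> \<le> E (\<lambda>\<omega> w. (g \<omega> w)^2)"
  proof (rule joint_mean_mono)
    fix \<omega> w
    have "(b \<omega> w)^2 \<le> 1" using b(2) by (simp add: power_le_one)
    then show "(b \<omega> w * g \<omega> w)^2 \<le> (g \<omega> w)^2"
      using mult_right_mono[of "(b \<omega> w)^2" 1 "(g \<omega> w)^2"] by (simp add: power_mult_distrib)
  qed
  also have "\<dots> = E (\<lambda>\<omega> w. Y \<omega> w * Y \<omega> (take_copies D {d} w))"
  proof -
    have "(\<Sum>w\<in>PiE K W. (g \<omega> w)^2) = (\<Sum>w\<in>PiE K W. Y \<omega> w * Y \<omega> (take_copies D {d} w))" for \<omega>
      unfolding take_copies_singleton g_def
      by (rule sum_PiE_copy_eq_sum_square[symmetric, OF finite_K finite_W d])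
        (use D_pos Y in \<open>auto simp: ignores_def\<close>)
    then show ?thesis unfolding joint_mean_def by simp
  qed
  finally show ?thesis .
qed

lemma joint_mean_swap_coords:
  assumes "d \<in> K" "e \<in> K" "W e = W d" "d \<noteq> e"
    and "\<And>\<omega> w. F \<omega> (w(d := w e, e := w d)) = H \<omega> w"
  shows "E F = E H"
proof -
  let ?s = "\<lambda>w. w(d := w e, e := w d)"
  have "?s (?s w) = w" for w using assms(4) by (auto simp: fun_eq_iff)
  moreover have "?s w \<in> PiE K W" if "w \<in> PiE K W" for w
    using that assms(1-3) by (auto simp: PiE_iff extensional_def)
  ultimately have "(\<Sum>w\<in>PiE K W. H \<omega> w) = (\<Sum>w\<in>PiE K W. F \<omega> w)" for \<omega>
    by (intro sum.reindex_bij_witness[of _ ?s ?s]) (use assms(5) in auto)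
  then show ?thesis unfolding joint_mean_def by simp
qed

end

text \<open>Each Cauchy--Schwarz step below bounds the square of the error by three error terms of
  the previous level, evaluated at the inflated error \<open>2 x + 2 \<surd>x\<close>.\<close>

fun box_err :: "nat \<Rightarrow> real \<Rightarrow> real" where
  "box_err 0 x = x"
| "box_err (Suc m) x = sqrt (3 * box_err m (2 * x + 2 * sqrt x))"

lemma box_err_nonneg: "0 \<le> x \<Longrightarrow> 0 \<le> box_err m x"
  by (induction m arbitrary: x) auto

lemma box_err_mono: "0 \<le> x \<Longrightarrow> x \<le> y \<Longrightarrow> box_err m x \<le> box_err m y"
proof (induction m arbitrary: x y)
  case 0
  then show ?case by simp
next
  case (Suc m)
  have "2 * x + 2 * sqrt x \<le> 2 * y + 2 * sqrt y"
    using Suc.prems real_sqrt_le_mono[OF Suc.prems(2)] by linarith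
  then have "box_err m (2 * x + 2 * sqrt x) \<le> box_err m (2 * y + 2 * sqrt y)"
    using Suc.prems by (intro Suc.IH) auto
  then show ?case by simp
qed

lemma box_err_small: "0 < e \<Longrightarrow> \<exists>\<rho>>0. \<forall>x. 0 \<le> x \<longrightarrow> x \<le> \<rho> \<longrightarrow> box_err m x < e"
proof (induction m arbitrary: e)
  case 0
  then show ?case by (intro exI[of _ "e / 2"]) auto
next
  case (Suc m)
  obtain \<rho> where \<rho>: "\<rho> > 0" "\<forall>x. 0 \<le> x \<longrightarrow> x \<le> \<rho> \<longrightarrow> box_err m x < e^2 / 3"
    using Suc.IH[of "e^2 / 3"] Suc.prems by auto
  define \<sigma> where "\<sigma> = min (\<rho> / 4) ((\<rho> / 4)^2)"
  show ?case
  proof (intro exI[of _ \<sigma>] conjI allI impI)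
    show "0 < \<sigma>" using \<rho> by (simp add: \<sigma>_def)
    fix x assume x: "0 \<le> x" "x \<le> \<sigma>"
    have "sqrt x \<le> \<rho> / 4"
      using x \<rho> real_sqrt_le_mono[of x "(\<rho> / 4)^2"] by (simp add: \<sigma>_def)
    moreover have "x \<le> \<rho> / 4" using x by (simp add: \<sigma>_def)
    ultimately have "box_err m (2 * x + 2 * sqrt x) < e^2 / 3" using x \<rho>(2) by simp
    then have "sqrt (3 * box_err m (2 * x + 2 * sqrt x)) < sqrt (e^2)"
      by (intro real_sqrt_less_mono) simp
    then show "box_err (Suc m) x < e" using Suc.prems by simp
  qed
qed

context doubled_grid
begin

lemma joint_mean_take_copy_lower:
  assumes d: "d \<in> K" "d + D \<in> K" "W (d + D) = W d"
    and Z: "\<forall>\<omega> w. 0 \<le> Z \<omega> w \<and> Z \<omega> w \<le> 1" "ignores Z (d + D)"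
    and "0 \<le> r" "r \<le> 1" "0 \<le> \<epsilon>" "r - \<epsilon> \<le> E Z"
  shows "r^2 - (2 * \<epsilon> + 2 * sqrt \<epsilon>) \<le> E (\<lambda>\<omega> w. Z \<omega> w * Z \<omega> (take_copies D {d} w))"
proof -
  have "(E Z)^2 \<le> E (\<lambda>\<omega> w. Z \<omega> w * Z \<omega> (take_copies D {d} w))"
    using cauchy_schwarz_take_copy[OF d ignores_const _ Z(2), of 1] by simp
  moreover have "r^2 - 2 * \<epsilon> \<le> (E Z)^2"
    by (rule square_lower_bound) (use assms joint_mean_nonneg in auto)
  ultimately show ?thesis using real_sqrt_ge_zero[OF \<open>0 \<le> \<epsilon>\<close>] by linarith
qed

lemma joint_mean_box_prod_remove:
  assumes I: "finite I" "d \<notin> I" "\<forall>j\<in>insert d I. j < D \<and> j \<in> K \<and> j + D \<in> K \<and> W (j + D) = W j"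
    and Z: "\<forall>j\<in>insert d I. ignores Z (j + D)" and "0 \<le> r" "0 \<le> \<epsilon>"
    and box: "E (box_prod D (insert d I) Z) \<le> r ^ 2 ^ card (insert d I) + \<epsilon>"
  shows "E (box_prod D I Z) \<le> r ^ 2 ^ card I + (2 * \<epsilon> + 2 * sqrt \<epsilon>)"
proof -
  have d: "d \<in> K" "d + D \<in> K" "W (d + D) = W d" using I by auto
  have "ignores (box_prod D I Z) (d + D)"
    by (rule ignores_box_prod) (use Z I in auto)
  moreover have "box_prod D (insert d I) Z
      = (\<lambda>\<omega> w. box_prod D I Z \<omega> w * box_prod D I Z \<omega> (take_copies D {d} w))"
    using I by (intro ext box_prod_insert_outer) auto
  ultimately have "(E (box_prod D I Z))^2 \<le> E (box_prod D (insert d I) Z)"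
    using cauchy_schwarz_take_copy[OF d ignores_const, of 1 "box_prod D I Z"] by simp
  also have "\<dots> \<le> (r ^ 2 ^ card I)^2 + \<epsilon>"
    using box I(1,2) by (simp add: power_mult[symmetric] mult.commute)
  finally have "E (box_prod D I Z) \<le> r ^ 2 ^ card I + sqrt \<epsilon>"
    by (rule le_add_sqrt_if_square_le) (use assms in auto)
  then show ?thesis using \<open>0 \<le> \<epsilon>\<close> real_sqrt_ge_zero[of \<epsilon>] by linarith
qed

lemma joint_mean_take_copy_expand:
  assumes d: "d \<in> K" "d + D \<in> K" "W (d + D) = W d"
    and Z: "ignores Z (d + D)" and b: "\<forall>i\<in>I. ignores (b i) (d + D)"
  defines "B \<equiv> \<lambda>\<omega> w. \<Prod>i\<in>I. b i \<omega> w * b i \<omega> (take_copies D {d} w)"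
  shows "E (\<lambda>\<omega> w. ((Z \<omega> w - r) * (\<Prod>i\<in>I. b i \<omega> w))
            * ((Z \<omega> (take_copies D {d} w) - r) * (\<Prod>i\<in>I. b i \<omega> (take_copies D {d} w))))
    = E (\<lambda>\<omega> w. (Z \<omega> w * Z \<omega> (take_copies D {d} w) - r^2) * B \<omega> w) - 2 * r * E (\<lambda>\<omega> w. (Z \<omega> w - r) * B \<omega> w)"
proof -
  let ?tc = "take_copies D {d}"
  have dD: "d \<noteq> d + D" using D_pos by simp
  have swap: "E (\<lambda>\<omega> w. (Z \<omega> (?tc w) - r) * B \<omega> w) = E (\<lambda>\<omega> w. (Z \<omega> w - r) * B \<omega> w)"
  proof (rule joint_mean_swap_coords[OF d dD])
    fix \<omega> and w :: "nat \<Rightarrow> 'b"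
    let ?sw = "w(d := w (d + D), d + D := w d)"
    have tc_sw: "?tc ?sw = w(d + D := w d)" and sw: "?sw = (?tc w)(d + D := w d)"
      using dD unfolding take_copies_singleton by (auto simp: fun_eq_iff)
    have "b i \<omega> ?sw = b i \<omega> (?tc w)" if "i \<in> I" for i
      using b that unfolding sw ignores_def by simp
    moreover have "b i \<omega> (?tc ?sw) = b i \<omega> w" if "i \<in> I" for i
      using b that unfolding tc_sw ignores_def by simp
    moreover have "Z \<omega> (?tc ?sw) = Z \<omega> w"
      using Z unfolding tc_sw ignores_def by simp
    ultimately show "(Z \<omega> (?tc ?sw) - r) * B \<omega> ?sw = (Z \<omega> w - r) * B \<omega> w"
      unfolding B_def by (simp add: mult.commute cong: prod.cong)
  qed
  have "E (\<lambda>\<omega> w. ((Z \<omega> w - r) * (\<Prod>i\<in>I. b i \<omega> w)) * ((Z \<omega> (?tc w) - r) * (\<Prod>i\<in>I. b i \<omega> (?tc w))))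
      = E (\<lambda>\<omega> w. (Z \<omega> w * Z \<omega> (?tc w) - r^2) * B \<omega> w - r * ((Z \<omega> w - r) * B \<omega> w)
               - r * ((Z \<omega> (?tc w) - r) * B \<omega> w))"
    unfolding B_def prod.distrib by (simp add: algebra_simps power2_eq_square)
  then show ?thesis
    unfolding joint_mean_diff joint_mean_cmult swap by simp
qed

lemma correlation_square_le:
  assumes d: "d \<in> K" "d + D \<in> K" "W (d + D) = W d" and I: "finite I" "d \<notin> I"
    and Z: "ignores Z (d + D)" and b: "ignores (b d) d" "\<forall>\<omega> w. 0 \<le> b d \<omega> w \<and> b d \<omega> w \<le> 1"
      "\<forall>i\<in>I. ignores (b i) (d + D)"
  defines "B \<equiv> \<lambda>\<omega> w. \<Prod>i\<in>I. b i \<omega> w * b i \<omega> (take_copies D {d} w)"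
  shows "(E (\<lambda>\<omega> w. (Z \<omega> w - r) * (\<Prod>i\<in>insert d I. b i \<omega> w)))^2
    \<le> E (\<lambda>\<omega> w. (Z \<omega> w * Z \<omega> (take_copies D {d} w) - r^2) * B \<omega> w) - 2 * r * E (\<lambda>\<omega> w. (Z \<omega> w - r) * B \<omega> w)"
proof -
  let ?Y = "\<lambda>\<omega> w. (Z \<omega> w - r) * (\<Prod>i\<in>I. b i \<omega> w)"
  have "(E (\<lambda>\<omega> w. (Z \<omega> w - r) * (\<Prod>i\<in>insert d I. b i \<omega> w)))^2 = (E (\<lambda>\<omega> w. b d \<omega> w * ?Y \<omega> w))^2"
    using I by (simp add: mult_ac)
  also have "\<dots> \<le> E (\<lambda>\<omega> w. ?Y \<omega> w * ?Y \<omega> (take_copies D {d} w))"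
    by (rule cauchy_schwarz_take_copy[OF d b(1,2)])
      (use b(3) Z in \<open>auto intro!: ignores_mult ignores_diff_const ignores_prod\<close>)
  also have "\<dots> = E (\<lambda>\<omega> w. (Z \<omega> w * Z \<omega> (take_copies D {d} w) - r^2) * B \<omega> w) - 2 * r * E (\<lambda>\<omega> w. (Z \<omega> w - r) * B \<omega> w)"
    unfolding B_def by (rule joint_mean_take_copy_expand[OF d Z b(3)])
  finally show ?thesis .
qed

text \<open>Cauchy--Schwarz in a coordinate \<open>d \<in> I\<close> removes \<open>b d\<close> and doubles \<open>Z\<close> and the other \<open>b i\<close> along
  \<open>d\<close>; the doubled \<open>Z\<close> again has nearly minimal box mean, with \<open>\<epsilon>\<close> replaced by \<open>2 \<epsilon> + 2 \<surd>\<epsilon>\<close>.\<close>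

lemma box_correlation_bound:
  assumes "finite I" "\<forall>j\<in>I. j < D \<and> j \<in> K \<and> j + D \<in> K \<and> W (j + D) = W j"
    and "\<forall>\<omega> w. 0 \<le> Z \<omega> w \<and> Z \<omega> w \<le> 1" "\<forall>j\<in>I. ignores Z (j + D)"
    and "\<forall>i\<in>I. \<forall>\<omega> w. 0 \<le> b i \<omega> w \<and> b i \<omega> w \<le> 1"
    and "\<forall>i\<in>I. ignores (b i) i \<and> (\<forall>j\<in>I. ignores (b i) (j + D))"
    and "0 \<le> r" "r \<le> 1" "0 \<le> \<epsilon>" "r - \<epsilon> \<le> E Z" "E (box_prod D I Z) \<le> r ^ 2 ^ card I + \<epsilon>"
  shows "\<bar>E (\<lambda>\<omega> w. (Z \<omega> w - r) * (\<Prod>i\<in>I. b i \<omega> w))\<bar> \<le> box_err (card I) \<epsilon>"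
  using assms
proof (induction I arbitrary: Z b r \<epsilon> rule: finite_induct)
  case empty
  then show ?case
    using joint_mean_diff[of Z "\<lambda>\<omega> w. r"] joint_mean_const[of r] by (simp add: box_prod_empty)
next
  case (insert d I)
  note I = insert.prems(1) and Z01 = insert.prems(2) and Z = insert.prems(3)
    and b01 = insert.prems(4) and b = insert.prems(5) and r = insert.prems(6,7)
    and \<epsilon> = insert.prems(8) and mean_Z = insert.prems(9) and mean_box = insert.prems(10)
  let ?tc = "take_copies D {d}"
  define \<epsilon>' where "\<epsilon>' = 2 * \<epsilon> + 2 * sqrt \<epsilon>"
  define Z2 where "Z2 \<omega> w = Z \<omega> w * Z \<omega> (?tc w)" for \<omega> w
  define b2 where "b2 i \<omega> w = b i \<omega> w * b i \<omega> (?tc w)" for i \<omega> w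
  have d: "d \<in> K" "d + D \<in> K" "W (d + D) = W d"
    and I': "\<forall>j\<in>I. j < D \<and> j \<in> K \<and> j + D \<in> K \<and> W (j + D) = W j" using I by auto
  have ne: "d < D" "\<forall>j\<in>I. j \<noteq> d \<and> j < D" using insert.hyps I by auto
  have \<epsilon>': "\<epsilon> \<le> \<epsilon>'" "0 \<le> \<epsilon>'" using \<epsilon> by (auto simp: \<epsilon>'_def)
  have b2: "\<forall>i\<in>I. \<forall>\<omega> w. 0 \<le> b2 i \<omega> w \<and> b2 i \<omega> w \<le> 1"
    "\<forall>i\<in>I. ignores (b2 i) i \<and> (\<forall>j\<in>I. ignores (b2 i) (j + D))"
    using b01 b ne unfolding b2_def[abs_def] by (auto intro: mult_le_one ignores_mult_take_copy)
  have Z2: "\<forall>\<omega> w. 0 \<le> Z2 \<omega> w \<and> Z2 \<omega> w \<le> 1" "\<forall>j\<in>I. ignores Z2 (j + D)"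
    using Z01 Z ne unfolding Z2_def[abs_def] by (auto intro: mult_le_one ignores_mult_take_copy)
  have bound_Z2: "\<bar>E (\<lambda>\<omega> w. (Z2 \<omega> w - r^2) * (\<Prod>i\<in>I. b2 i \<omega> w))\<bar> \<le> box_err (card I) \<epsilon>'"
  proof (rule insert.IH[OF I' Z2 b2])
    show "r^2 - \<epsilon>' \<le> E Z2"
      unfolding Z2_def \<epsilon>'_def by (rule joint_mean_take_copy_lower) (use d Z Z01 r \<epsilon> mean_Z in auto)
    have "box_prod D I Z2 = box_prod D (insert d I) Z"
      unfolding Z2_def[abs_def] using insert.hyps I by (intro ext box_prod_insert_inner[symmetric]) auto
    then show "E (box_prod D I Z2) \<le> (r^2) ^ 2 ^ card I + \<epsilon>'"
      using mean_box \<epsilon>' insert.hyps by (simp add: power_mult[symmetric] mult.commute)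
  qed (use r \<epsilon>' in \<open>auto simp: power_le_one\<close>)
  have bound_Z: "\<bar>E (\<lambda>\<omega> w. (Z \<omega> w - r) * (\<Prod>i\<in>I. b2 i \<omega> w))\<bar> \<le> box_err (card I) \<epsilon>'"
  proof (rule insert.IH[OF I' Z01 _ b2])
    show "E (box_prod D I Z) \<le> r ^ 2 ^ card I + \<epsilon>'"
      unfolding \<epsilon>'_def by (rule joint_mean_box_prod_remove) (use insert.hyps I Z r \<epsilon> mean_box in auto)
  qed (use Z r \<epsilon>' mean_Z in auto)
  have "(E (\<lambda>\<omega> w. (Z \<omega> w - r) * (\<Prod>i\<in>insert d I. b i \<omega> w)))^2
      \<le> E (\<lambda>\<omega> w. (Z2 \<omega> w - r^2) * (\<Prod>i\<in>I. b2 i \<omega> w))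
        - 2 * r * E (\<lambda>\<omega> w. (Z \<omega> w - r) * (\<Prod>i\<in>I. b2 i \<omega> w))"
    unfolding Z2_def b2_def by (rule correlation_square_le[OF d insert.hyps]) (use Z b b01 in auto)
  also have "\<dots> \<le> 3 * box_err (card I) \<epsilon>'"
  proof -
    have "\<bar>r * E (\<lambda>\<omega> w. (Z \<omega> w - r) * (\<Prod>i\<in>I. b2 i \<omega> w))\<bar> \<le> 1 * box_err (card I) \<epsilon>'"
      unfolding abs_mult using r bound_Z by (intro mult_mono) auto
    then show ?thesis using bound_Z2 by linarith
  qed
  finally show ?case
    using insert.hyps real_le_rsqrt by (simp add: \<epsilon>'_def)
qed

end

section \<open>Spreadability\<close>

lemma prob_diff_le_tv_dist:
  "\<bar>measure_pmf.prob q1 A - measure_pmf.prob q2 A\<bar> \<le> tv_dist q1 q2"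
proof -
  have "bdd_above (range (\<lambda>A. \<bar>measure_pmf.prob q1 A - measure_pmf.prob q2 A\<bar>))"
  proof (rule bdd_aboveI[of _ 1], clarify)
    fix B
    have "0 \<le> measure_pmf.prob q1 B" "measure_pmf.prob q1 B \<le> 1"
      "0 \<le> measure_pmf.prob q2 B" "measure_pmf.prob q2 B \<le> 1"
      by (auto simp: measure_pmf.prob_le_1)
    then show "\<bar>measure_pmf.prob q1 B - measure_pmf.prob q2 B\<bar> \<le> 1" by linarith
  qed
  then show ?thesis unfolding tv_dist_def by (rule cSUP_upper[OF UNIV_I])
qed

lemma sorted_list_of_set_image_strict_mono:
  assumes "finite V" "strict_mono_on V \<psi>"
  shows "sorted_list_of_set (\<psi> ` V) = map \<psi> (sorted_list_of_set V)"
proof -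
  have "sorted_wrt (<) (map \<psi> (sorted_list_of_set V))"
    unfolding sorted_wrt_map
    by (rule sorted_wrt_mono_rel[OF _ strict_sorted_list_of_set])
      (use assms in \<open>auto simp: strict_mono_on_def\<close>)
  then have "sorted (map \<psi> (sorted_list_of_set V))" "distinct (map \<psi> (sorted_list_of_set V))"
    by (auto simp: strict_sorted_iff)
  then show ?thesis
    by (intro sorted_distinct_set_unique[of "sorted_list_of_set (\<psi> ` V)"]) (use assms in auto)
qed

lemma nth_sorted_list_of_set_positions:
  fixes V :: "'a::linorder set"
  assumes "finite V" "t \<subseteq> V"
  defines "P \<equiv> {i. i < card V \<and> sorted_list_of_set V ! i \<in> t}"
  shows "(\<lambda>i. sorted_list_of_set V ! i) ` P = t" "card P = card t"
proof -
  let ?l = "sorted_list_of_set V"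
  show img: "(\<lambda>i. ?l ! i) ` P = t"
  proof
    show "(\<lambda>i. ?l ! i) ` P \<subseteq> t" by (auto simp: P_def)
    show "t \<subseteq> (\<lambda>i. ?l ! i) ` P"
    proof
      fix x assume "x \<in> t"
      then have "x \<in> set ?l" using assms(1,2) by auto
      then obtain i where "i < length ?l" "?l ! i = x" by (auto simp: in_set_conv_nth)
      then show "x \<in> (\<lambda>i. ?l ! i) ` P" using \<open>x \<in> t\<close> by (auto simp: P_def)
    qed
  qed
  have "inj_on (\<lambda>i. ?l ! i) P"
    by (auto simp: inj_on_def P_def nth_eq_iff_index_eq)
  then show "card P = card t" using img card_image by fastforce
qed

lemma prob_subarray_law_positions:
  fixes \<psi> :: "nat \<Rightarrow> nat"
  assumes V: "finite V" and mono: "strict_mono_on V \<psi>" and G: "\<forall>t\<in>\<G>. t \<subseteq> V \<and> card t = d"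
  defines "pos t \<equiv> {i. i < card V \<and> sorted_list_of_set V ! i \<in> t}"
  shows "measure_pmf.prob (subarray_law d (\<psi> ` V) p) {g. \<forall>t\<in>\<G>. g (pos t) = c t}
    = measure_pmf.prob p {f. \<forall>t\<in>\<G>. f (\<psi> ` t) = c t}"
proof -
  have card: "card (\<psi> ` V) = card V"
    using strict_mono_on_imp_inj_on[OF mono] by (simp add: card_image)
  have sorted: "sorted_list_of_set (\<psi> ` V) = map \<psi> (sorted_list_of_set V)"
    by (rule sorted_list_of_set_image_strict_mono[OF V mono])
  have pos: "pos t \<in> dsets {..<card V} d" if "t \<in> \<G>" for t
    using nth_sorted_list_of_set_positions[OF V, of t] G that by (auto simp: dsets_def pos_def)
  have "(\<lambda>i. map \<psi> (sorted_list_of_set V) ! i) ` pos t = \<psi> ` t" if "t \<in> \<G>" for t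
  proof -
    have "(\<lambda>i. map \<psi> (sorted_list_of_set V) ! i) ` pos t = \<psi> ` ((\<lambda>i. sorted_list_of_set V ! i) ` pos t)"
      by (auto simp: pos_def image_image)
    then show ?thesis using nth_sorted_list_of_set_positions[OF V, of t] G that by (simp add: pos_def)
  qed
  then have "(\<lambda>f t. if t \<in> dsets {..<card (\<psi> ` V)} d then f ((\<lambda>i. sorted_list_of_set (\<psi> ` V) ! i) ` t)
      else undefined) -` {g. \<forall>t\<in>\<G>. g (pos t) = c t} = {f. \<forall>t\<in>\<G>. f (\<psi> ` t) = c t}"
    using pos unfolding card sorted by auto
  then show ?thesis unfolding subarray_law_def by simp
qed

lemma spreadable_strict_mono_prob:
  assumes sp: "spreadable \<eta> d n p" and V: "V \<subseteq> {1..n}" "d \<le> card V"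
    and mono: "strict_mono_on V \<psi>" and img: "\<psi> ` V \<subseteq> {1..n}"
    and G: "\<forall>t\<in>\<G>. t \<subseteq> V \<and> card t = d"
  shows "\<bar>measure_pmf.prob p {f. \<forall>t\<in>\<G>. f (\<psi> ` t) = c t} - measure_pmf.prob p {f. \<forall>t\<in>\<G>. f t = c t}\<bar> \<le> \<eta>"
proof -
  have finV: "finite V" using V(1) finite_subset by blast
  let ?E = "{g. \<forall>t\<in>\<G>. g {i. i < card V \<and> sorted_list_of_set V ! i \<in> t} = c t}"
  have "measure_pmf.prob (subarray_law d V p) ?E = measure_pmf.prob p {f. \<forall>t\<in>\<G>. f t = c t}"
    using prob_subarray_law_positions[OF finV _ G, of id p c] by (simp add: strict_mono_on_def)
  moreover have "measure_pmf.prob (subarray_law d (\<psi> ` V) p) ?E = measure_pmf.prob p {f. \<forall>t\<in>\<G>. f (\<psi> ` t) = c t}"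
    by (rule prob_subarray_law_positions[OF finV mono G])
  moreover have "tv_dist (subarray_law d V p) (subarray_law d (\<psi> ` V) p) \<le> \<eta>"
    using sp V img strict_mono_on_imp_inj_on[OF mono] unfolding spreadable_def by (simp add: card_image)
  ultimately show ?thesis
    using prob_diff_le_tv_dist[of "subarray_law d V p" ?E "subarray_law d (\<psi> ` V) p"] by linarith
qed

section \<open>Block embeddings\<close>

lemma ball_nth_sorted_list_of_set:
  fixes U :: "'a::linorder set"
  assumes "finite U"
  shows "(\<forall>i\<in>{1..card U}. Q (sorted_list_of_set U ! (i - 1))) \<longleftrightarrow> (\<forall>u\<in>U. Q u)"
proof
  assume Q: "\<forall>i\<in>{1..card U}. Q (sorted_list_of_set U ! (i - 1))"
  show "\<forall>u\<in>U. Q u"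
  proof
    fix u assume "u \<in> U"
    then have "u \<in> set (sorted_list_of_set U)" using assms by simp
    then obtain j where "j < length (sorted_list_of_set U)" "sorted_list_of_set U ! j = u"
      by (auto simp: in_set_conv_nth)
    then show "Q u" using Q[rule_format, of "Suc j"] by simp
  qed
next
  assume "\<forall>u\<in>U. Q u"
  moreover have "sorted_list_of_set U ! (i - 1) \<in> U" if "i \<in> {1..card U}" for i
  proof -
    have "i - 1 < length (sorted_list_of_set U)" using that by auto
    from nth_mem[OF this] show ?thesis using assms by simp
  qed
  ultimately show "\<forall>i\<in>{1..card U}. Q (sorted_list_of_set U ! (i - 1))" by blast
qed

lemma is_box_ordered_pairs:
  fixes U :: "nat set"
  assumes U: "finite U" and H: "\<forall>u\<in>U. H u \<subseteq> {1..n} \<and> card (H u) = 2"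
    and ord: "\<forall>u\<in>U. \<forall>u'\<in>U. u < u' \<longrightarrow> Max (H u) < Min (H u')"
  shows "is_box (card U) n {t \<in> dsets {1..n} (card U). \<forall>u\<in>U. card (t \<inter> H u) = 1}"
proof -
  let ?l = "sorted_list_of_set U"
  note reindex = ball_nth_sorted_list_of_set[OF U]
  show ?thesis unfolding is_box_def
  proof (intro exI[of _ "\<lambda>i. H (?l ! (i - 1))"] conjI)
    show "\<forall>i\<in>{1..card U}. H (?l ! (i - 1)) \<subseteq> {1..n} \<and> card (H (?l ! (i - 1))) = 2"
      using reindex[of "\<lambda>u. H u \<subseteq> {1..n} \<and> card (H u) = 2"] H by simp
    show "\<forall>i\<in>{1..<card U}. Max (H (?l ! (i - 1))) < Min (H (?l ! (Suc i - 1)))"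
    proof
      fix i assume i: "i \<in> {1..<card U}"
      have "i - 1 < length ?l" "i < length ?l" using i by auto
      then have "?l ! (i - 1) \<in> U" "?l ! i \<in> U" using U nth_mem[of "i - 1" ?l] nth_mem[of i ?l] by simp_all
      moreover have "?l ! (i - 1) < ?l ! i"
        by (rule sorted_wrt_nth_less[OF strict_sorted_list_of_set]) (use i in auto)
      ultimately show "Max (H (?l ! (i - 1))) < Min (H (?l ! (Suc i - 1)))"
        using ord by simp
    qed
    have "(\<forall>u\<in>U. card (t \<inter> H u) = 1) \<longleftrightarrow> (\<forall>i\<in>{1..card U}. card (t \<inter> H (?l ! (i - 1))) = 1)" for t
      using reindex[of "\<lambda>u. card (t \<inter> H u) = 1"] by simp
    then show "{t \<in> dsets {1..n} (card U). \<forall>u\<in>U. card (t \<inter> H u) = 1}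
      = {t \<in> dsets {1..n} (card U). \<forall>i\<in>{1..card U}. card (t \<inter> H (?l ! (i - 1))) = 1}"
      by blast
  qed
qed

text \<open>Each point \<open>v\<close> of \<open>V\<close> receives a block of \<open>L\<close> consecutive integers, and the blocks are
  placed in the order of \<open>V\<close> inside \<open>{1..n}\<close>. The points of \<open>s\<close> are embedded at a randomly
  chosen point of their block, and each coordinate \<open>u \<in> s\<close> has an independent copy
  \<open>u + shift\<close>; the other points of \<open>V\<close> go to the start of their block.\<close>

locale block_embedding =
  fixes n :: nat and V s :: "nat set" and L :: nat
  assumes V: "V \<subseteq> {1..n}" and s: "s \<subseteq> V" and L_pos: "0 < L" and card_V_L: "card V * L \<le> n"
begin

definition rank where "rank v = card {x\<in>V. x < v}"
definition block where "block v = {1 + rank v * L ..< 1 + Suc (rank v) * L}"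
definition shift where "shift = Suc n"
definition choices where "choices j = block (if j \<le> n then j else j - shift)"
definition coords where "coords = s \<union> (\<lambda>u. u + shift) ` s"
definition embed where "embed w v = (if v \<in> s then w v else 1 + rank v * L)"

abbreviation grid where "grid \<equiv> PiE coords choices"

lemma finite_V: "finite V"
  using V finite_subset by blast

lemma finite_s: "finite s"
  using s finite_V finite_subset by blast

lemma block_subset: "v \<in> V \<Longrightarrow> block v \<subseteq> {1..n}"
proof -
  assume v: "v \<in> V"
  have "rank v < card V" unfolding rank_def by (rule psubset_card_mono[OF finite_V]) (use v in auto)
  then have "Suc (rank v) * L \<le> card V * L" by (intro mult_le_mono1) auto
  then show ?thesis using card_V_L by (auto simp: block_def)
qed

lemma block_less: "v \<in> V \<Longrightarrow> v' \<in> V \<Longrightarrow> v < v' \<Longrightarrow> x \<in> block v \<Longrightarrow> y \<in> block v' \<Longrightarrow> x < y"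
proof -
  assume a: "v \<in> V" "v' \<in> V" "v < v'" "x \<in> block v" "y \<in> block v'"
  have "rank v < rank v'" unfolding rank_def by (rule psubset_card_mono) (use finite_V a in auto)
  then have "Suc (rank v) * L \<le> rank v' * L" by (intro mult_le_mono1) auto
  then show "x < y" using a(4,5) by (auto simp: block_def)
qed

lemma block_disjoint: "u \<in> V \<Longrightarrow> u' \<in> V \<Longrightarrow> x \<in> block u \<Longrightarrow> x \<in> block u' \<Longrightarrow> u = u'"
  by (metis block_less less_irrefl linorder_neqE_nat)

lemma card_block: "card (block v) = L"
  by (simp add: block_def)

lemma finite_block: "finite (block v)"
  by (simp add: block_def)

lemma block_start: "1 + rank v * L \<in> block v"
  using L_pos by (simp add: block_def)

lemma choices_s: "u \<in> s \<Longrightarrow> choices u = block u" "u \<in> s \<Longrightarrow> choices (u + shift) = block u"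
  using s V by (auto simp: choices_def shift_def)

lemma coords_s: "u \<in> s \<Longrightarrow> u \<in> coords" "u \<in> s \<Longrightarrow> u + shift \<in> coords"
  by (auto simp: coords_def)

lemma s_less_shift: "u \<in> s \<Longrightarrow> u < shift"
  using s V by (auto simp: shift_def)

lemma doubled_grid: "finite \<Omega> \<Longrightarrow> \<forall>\<omega>\<in>\<Omega>. 0 \<le> P \<omega> \<Longrightarrow> sum P \<Omega> = 1 \<Longrightarrow> doubled_grid \<Omega> P coords choices shift"
  using finite_s L_pos
  by unfold_locales (auto simp: coords_def choices_def block_def shift_def finite_PiE PiE_eq_empty_iff)

lemma grid_block: "w \<in> grid \<Longrightarrow> u \<in> s \<Longrightarrow> w u \<in> block u \<and> w (u + shift) \<in> block u"
  using coords_s choices_s by (metis PiE_mem)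

lemma embed_block: "w \<in> grid \<Longrightarrow> v \<in> V \<Longrightarrow> embed w v \<in> block v"
  using grid_block block_start by (auto simp: embed_def)

lemma embed_strict_mono: "w \<in> grid \<Longrightarrow> strict_mono_on V (embed w)"
  by (auto simp: strict_mono_on_def intro: block_less embed_block)

lemma embed_image: "w \<in> grid \<Longrightarrow> embed w ` V \<subseteq> {1..n}"
  using embed_block block_subset by blast

lemma embed_upd: "v \<notin> s \<Longrightarrow> embed (w(v := x)) = embed w"
  by (auto simp: embed_def fun_eq_iff)

lemma embed_upd_image: "u \<notin> t \<Longrightarrow> embed (w(u := x)) ` t = embed w ` t"
  by (auto simp: embed_def)

lemma embed_image_s: "embed w ` s = w ` s"
  by (auto simp: embed_def)

lemma take_copies_block: "w \<in> grid \<Longrightarrow> u \<in> s \<Longrightarrow> take_copies shift T w u \<in> block u"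
  using grid_block by (auto simp: take_copies_def)

lemma take_copies_strict_mono: "w \<in> grid \<Longrightarrow> strict_mono_on s (take_copies shift T w)"
  using s by (auto simp: strict_mono_on_def intro: block_less take_copies_block)

lemma take_copies_image: "w \<in> grid \<Longrightarrow> take_copies shift T w ` s \<subseteq> {1..n}"
  using take_copies_block block_subset s by blast

lemma sum_grid_collisions:
  assumes "u \<in> s"
  shows "(\<Sum>w\<in>grid. if w u = w (u + shift) then 1 else 0 :: real) = real (card grid) / real L"
proof -
  have fin: "finite coords" "\<forall>i\<in>coords. finite (choices i)" and ne: "choices u \<noteq> {}"
    using finite_s block_start by (auto simp: coords_def choices_def block_def)
  have "(\<Sum>w\<in>grid. if w u = w (u + shift) then 1 else 0 :: real)
      = (\<Sum>w\<in>grid. (\<Sum>x\<in>choices u. if (w(u := x)) u = (w(u := x)) (u + shift) then 1 else 0) / real (card (choices u)))"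
    by (rule sum_PiE_resample_average[OF fin(1) coords_s(1)[OF assms] fin(2) ne])
  also have "\<dots> = (\<Sum>w\<in>grid. 1 / real L)"
  proof (intro sum.cong refl)
    fix w assume "w \<in> grid"
    then have "w (u + shift) \<in> block u" using grid_block[of w u] assms by auto
    then have "(\<Sum>x\<in>block u. if x = w (u + shift) then 1 else 0 :: real) = 1"
      by (simp add: finite_block)
    moreover have "(\<Sum>x\<in>block u. if (w(u := x)) u = (w(u := x)) (u + shift) then 1 else 0 :: real)
        = (\<Sum>x\<in>block u. if x = w (u + shift) then 1 else 0)"
      by (intro sum.cong refl) (auto simp: shift_def)
    ultimately show "(\<Sum>x\<in>choices u. if (w(u := x)) u = (w(u := x)) (u + shift) then 1 else 0) / real (card (choices u))
        = 1 / real L"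
      unfolding choices_s(1)[OF assms] card_block by simp
  qed
  finally show ?thesis by simp
qed

context
  fixes w assumes w: "w \<in> grid" and no_collision: "\<forall>u\<in>s. w u \<noteq> w (u + shift)"
begin

definition pair where "pair u = {w u, w (u + shift)}"

lemma pair_block: "u \<in> s \<Longrightarrow> pair u \<subseteq> block u"
  using grid_block[OF w] by (auto simp: pair_def)

lemma take_copies_image_Int_pair:
  assumes "u \<in> s"
  shows "(take_copies shift T w ` s) \<inter> pair u = {take_copies shift T w u}"
proof -
  have "x = take_copies shift T w u" if "u' \<in> s" "x = take_copies shift T w u'" "x \<in> pair u" for x u'
  proof -
    have "x \<in> block u'" "x \<in> block u"
      using take_copies_block[OF w that(1)] pair_block[OF assms] that(2,3) by auto
    then have "u = u'" using block_disjoint assms that(1) s by blast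
    then show ?thesis using that(2) by simp
  qed
  moreover have "take_copies shift T w u \<in> pair u" by (auto simp: take_copies_def pair_def)
  ultimately show ?thesis using assms by blast
qed

lemma take_copies_image_inj: "inj_on (\<lambda>T. take_copies shift T w ` s) (Pow s)"
proof (rule inj_onI)
  fix T T' assume T: "T \<in> Pow s" "T' \<in> Pow s" and eq: "take_copies shift T w ` s = take_copies shift T' w ` s"
  have "u \<in> T \<longleftrightarrow> u \<in> T'" if "u \<in> s" for u
  proof -
    have "take_copies shift T w u = take_copies shift T' w u"
      using take_copies_image_Int_pair[OF that, of T] take_copies_image_Int_pair[OF that, of T'] eq by simp
    moreover have "w u \<noteq> w (u + shift)" using no_collision that by simp
    ultimately show ?thesis by (auto simp: take_copies_def split: if_splits)
  qed
  then show "T = T'" using T by auto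
qed

lemma card_take_copies_box: "card ((\<lambda>T. take_copies shift T w ` s) ` Pow s) = 2 ^ card s"
  using take_copies_image_inj finite_s by (simp add: card_image card_Pow)

lemma take_copies_box_eq:
  "(\<lambda>T. take_copies shift T w ` s) ` Pow s = {t \<in> dsets {1..n} (card s). \<forall>u\<in>s. card (t \<inter> pair u) = 1}"
proof (intro equalityI subsetI)
  fix t assume "t \<in> (\<lambda>T. take_copies shift T w ` s) ` Pow s"
  then obtain T where t: "t = take_copies shift T w ` s" by auto
  have "card t = card s"
    using strict_mono_on_imp_inj_on[OF take_copies_strict_mono[OF w]] by (simp add: t card_image)
  then show "t \<in> {t \<in> dsets {1..n} (card s). \<forall>u\<in>s. card (t \<inter> pair u) = 1}"
    using take_copies_image[OF w] take_copies_image_Int_pair by (simp add: t dsets_def)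
next
  fix t assume "t \<in> {t \<in> dsets {1..n} (card s). \<forall>u\<in>s. card (t \<inter> pair u) = 1}"
  then have t: "finite t" "card t = card s" and one: "\<forall>u\<in>s. card (t \<inter> pair u) = 1"
    by (auto simp: dsets_def intro: finite_subset)
  define pick where "pick u = the_elem (t \<inter> pair u)" for u
  have pick: "pick u \<in> t \<and> pick u \<in> pair u" if "u \<in> s" for u
  proof -
    have "card (t \<inter> pair u) = 1" using one that by blast
    then obtain x where x: "t \<inter> pair u = {x}" by (rule card_1_singletonE)
    then have "pick u = x" by (simp add: pick_def)
    moreover have "x \<in> t" "x \<in> pair u" using x by blast+
    ultimately show ?thesis by simp
  qed
  have inj: "inj_on pick s"
  proof (rule inj_onI)
    fix u u' assume u: "u \<in> s" "u' \<in> s" "pick u = pick u'"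
    then have "pick u \<in> block u" "pick u \<in> block u'"
      using pick pair_block by (metis subsetD)+
    then show "u = u'" using block_disjoint u s by blast
  qed
  have "pick ` s = t"
  proof (rule card_subset_eq[OF t(1)])
    show "pick ` s \<subseteq> t" using pick by auto
    show "card (pick ` s) = card t" using inj t by (simp add: card_image)
  qed
  moreover have "take_copies shift {u\<in>s. pick u \<noteq> w u} w u = pick u" if "u \<in> s" for u
    using pick[OF that] that by (auto simp: take_copies_def pair_def)
  ultimately show "t \<in> (\<lambda>T. take_copies shift T w ` s) ` Pow s"
    by (intro image_eqI[of _ _ "{u\<in>s. pick u \<noteq> w u}"]) (auto simp: image_iff)
qed

lemma is_box_take_copies: "is_box (card s) n ((\<lambda>T. take_copies shift T w ` s) ` Pow s)"
  unfolding take_copies_box_eq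
proof (rule is_box_ordered_pairs[OF finite_s])
  show "\<forall>u\<in>s. pair u \<subseteq> {1..n} \<and> card (pair u) = 2"
  proof
    fix u assume u: "u \<in> s"
    have "pair u \<subseteq> {1..n}" using pair_block[OF u] block_subset u s by blast
    then show "pair u \<subseteq> {1..n} \<and> card (pair u) = 2" using no_collision u by (simp add: pair_def)
  qed
  show "\<forall>u\<in>s. \<forall>u'\<in>s. u < u' \<longrightarrow> Max (pair u) < Min (pair u')"
  proof (intro ballI impI)
    fix u u' assume u: "u \<in> s" "u' \<in> s" "u < u'"
    have "Max (pair u) \<in> block u" "Min (pair u') \<in> block u'"
      using Max_in[of "pair u"] Min_in[of "pair u'"] pair_block u by (auto simp: pair_def)
    then show "Max (pair u) < Min (pair u')" using block_less u s by blast
  qed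
qed

end

end

section \<open>One decorrelation step\<close>

locale decorrelation_step = block_embedding n V s L for n V s L +
  fixes p :: "(nat set \<Rightarrow> nat) pmf" and d :: nat and \<eta> \<theta> :: real and S X :: "nat set"
    and F' :: "nat set set" and a :: "nat set \<Rightarrow> nat"
  assumes card_s: "card s = d"
    and F'_dsets: "F' \<subseteq> dsets {1..n} d" and F'_V: "\<Union>F' \<subseteq> V" and s_notin_F': "s \<notin> F'"
    and spreadable: "spreadable \<eta> d n p" and box_independent: "box_independent \<theta> S d n p"
    and array_valued: "array_valued d n p X" and finite_X: "finite X"
    and a_s: "a s \<in> S" and \<eta>_nonneg: "0 \<le> \<eta>" and \<theta>_nonneg: "0 \<le> \<theta>"
begin

text \<open>Setting the irrelevant entries to \<open>0\<close> gives a law with finite support.\<close>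

definition law where "law = map_pmf (\<lambda>f t. if t \<in> dsets {1..n} d then f t else 0) p"

lemma finite_law: "finite (set_pmf law)"
proof -
  have "finite (dsets {1..n} d)"
    by (rule finite_subset[of _ "Pow {1..n}"]) (auto simp: dsets_def)
  then have "finite {g. \<forall>x. (x \<in> dsets {1..n} d \<longrightarrow> g x \<in> X) \<and> (x \<notin> dsets {1..n} d \<longrightarrow> g x = (0::nat))}"
    by (rule finite_set_of_finite_funs[OF _ finite_X])
  moreover have "set_pmf law \<subseteq> {g. \<forall>x. (x \<in> dsets {1..n} d \<longrightarrow> g x \<in> X) \<and> (x \<notin> dsets {1..n} d \<longrightarrow> g x = 0)}"
    using array_valued unfolding law_def array_valued_def by auto
  ultimately show ?thesis using finite_subset by blast
qed

sublocale G: doubled_grid "set_pmf law" "pmf law" coords choices shift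
  by (rule doubled_grid) (use finite_law sum_pmf_eq_1[OF finite_law] in auto)

lemma prob_law:
  assumes "\<forall>t\<in>\<G>. \<phi> t \<in> dsets {1..n} d"
  shows "measure_pmf.prob law {\<omega>. \<forall>t\<in>\<G>. \<omega> (\<phi> t) = c t} = measure_pmf.prob p {f. \<forall>t\<in>\<G>. f (\<phi> t) = c t}"
proof -
  have "(\<lambda>f t. if t \<in> dsets {1..n} d then f t else 0) -` {\<omega>. \<forall>t\<in>\<G>. \<omega> (\<phi> t) = c t}
      = {f. \<forall>t\<in>\<G>. f (\<phi> t) = c t}"
    using assms by auto
  then show ?thesis unfolding law_def by simp
qed

lemma joint_mean_indicator:
  assumes "\<And>w t. w \<in> grid \<Longrightarrow> t \<in> \<G> \<Longrightarrow> \<phi> w t \<in> dsets {1..n} d"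
  shows "G.E (\<lambda>\<omega> w. if \<forall>t\<in>\<G>. \<omega> (\<phi> w t) = c t then 1 else 0)
    = (\<Sum>w\<in>grid. measure_pmf.prob p {f. \<forall>t\<in>\<G>. f (\<phi> w t) = c t}) / real (card grid)"
proof -
  have "(\<Sum>\<omega>\<in>set_pmf law. pmf law \<omega> * (\<Sum>w\<in>grid. if \<forall>t\<in>\<G>. \<omega> (\<phi> w t) = c t then 1 else 0))
      = (\<Sum>w\<in>grid. \<Sum>\<omega>\<in>set_pmf law. pmf law \<omega> * (if \<forall>t\<in>\<G>. \<omega> (\<phi> w t) = c t then 1 else 0))"
    by (simp add: sum_distrib_left sum.swap[of _ "set_pmf law"])
  also have "\<dots> = (\<Sum>w\<in>grid. measure_pmf.prob p {f. \<forall>t\<in>\<G>. f (\<phi> w t) = c t})"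
    using assms by (intro sum.cong refl) (simp add: sum_pmf_indicator[OF finite_law] prob_law)
  finally show ?thesis unfolding joint_mean_def by simp
qed

lemma embed_dsets: "w \<in> grid \<Longrightarrow> t \<subseteq> V \<Longrightarrow> card t = d \<Longrightarrow> embed w ` t \<in> dsets {1..n} d"
  using embed_image[of w] inj_on_subset[OF strict_mono_on_imp_inj_on[OF embed_strict_mono]]
  by (auto simp: dsets_def card_image)

lemma embed_dsets_insert: "w \<in> grid \<Longrightarrow> t \<in> insert s F' \<Longrightarrow> embed w ` t \<in> dsets {1..n} d"
  using F'_dsets F'_V s card_s by (intro embed_dsets) (auto simp: dsets_def)

lemma embed_prob_close:
  assumes "w \<in> grid" "\<G> \<subseteq> insert s F'"
  shows "\<bar>measure_pmf.prob p {f. \<forall>t\<in>\<G>. f (embed w ` t) = c t} - measure_pmf.prob p {f. \<forall>t\<in>\<G>. f t = c t}\<bar> \<le> \<eta>"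
proof (rule spreadable_strict_mono_prob[OF spreadable V])
  show "d \<le> card V" using card_s card_mono[OF finite_V s] by simp
  show "strict_mono_on V (embed w)" "embed w ` V \<subseteq> {1..n}"
    using embed_strict_mono embed_image assms(1) by auto
  have "t \<subseteq> V \<and> card t = d" if "t \<in> insert s F'" for t
    using that F'_dsets F'_V s card_s by (auto simp: dsets_def)
  then show "\<forall>t\<in>\<G>. t \<subseteq> V \<and> card t = d" using assms(2) by blast
qed

definition base_prob where "base_prob = measure_pmf.prob p {f. f s = a s}"
definition err where "err = 2 ^ d * \<eta> + \<theta> + real d / real L"

lemma base_prob_bounds: "0 \<le> base_prob" "base_prob \<le> 1"
  by (auto simp: base_prob_def measure_pmf.prob_le_1)

lemma err_nonneg: "0 \<le> err"
  using \<eta>_nonneg \<theta>_nonneg by (simp add: err_def)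

definition indicator_s where
  "indicator_s \<omega> w = (if \<omega> (embed w ` s) = a s then 1 else 0 :: real)"

text \<open>Each \<open>t \<in> F'\<close> misses some point of \<open>s\<close>; grouping the events of \<open>F'\<close> by such a point \<open>u\<close>
  makes the group of \<open>u\<close> independent of the coordinate \<open>u\<close>.\<close>

definition pick where "pick t = (SOME u. u \<in> s \<and> u \<notin> t)"

definition indicator_group where
  "indicator_group u \<omega> w = (\<Prod>t\<in>{t\<in>F'. pick t = u}. if \<omega> (embed w ` t) = a t then 1 else 0 :: real)"

lemma pick: "t \<in> F' \<Longrightarrow> pick t \<in> s \<and> pick t \<notin> t"
proof -
  assume t: "t \<in> F'"
  have "\<exists>u. u \<in> s \<and> u \<notin> t"
  proof (rule ccontr)
    assume "\<nexists>u. u \<in> s \<and> u \<notin> t"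
    then have "s \<subseteq> t" by auto
    moreover have "finite t" "card t = card s" using t F'_dsets card_s by (auto simp: dsets_def intro: finite_subset)
    ultimately have "s = t" by (intro card_subset_eq) auto
    then show False using t s_notin_F' by simp
  qed
  then show ?thesis unfolding pick_def by (rule someI_ex)
qed

lemma prod_indicator_group:
  "(\<Prod>u\<in>s. indicator_group u \<omega> w) = (if \<forall>t\<in>F'. \<omega> (embed w ` t) = a t then 1 else 0)"
proof -
  have "finite F'" using F'_V finite_V by (meson Sup_le_iff finite_UnionD finite_subset)
  then have "(\<Prod>u\<in>s. indicator_group u \<omega> w) = (\<Prod>t\<in>F'. if \<omega> (embed w ` t) = a t then 1 else 0 :: real)"
    unfolding indicator_group_def by (intro prod.group) (use finite_s pick in auto)
  then show ?thesis using \<open>finite F'\<close> by (simp add: prod_indicator)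
qed

lemma indicators_range:
  "\<forall>\<omega> w. 0 \<le> indicator_s \<omega> w \<and> indicator_s \<omega> w \<le> 1"
  "\<forall>i\<in>s. \<forall>\<omega> w. 0 \<le> indicator_group i \<omega> w \<and> indicator_group i \<omega> w \<le> 1"
  by (auto simp: indicator_s_def indicator_group_def intro: prod_nonneg prod_le_1)

lemma indicators_ignore:
  "\<forall>j\<in>s. ignores indicator_s (j + shift)"
  "\<forall>i\<in>s. ignores (indicator_group i) i \<and> (\<forall>j\<in>s. ignores (indicator_group i) (j + shift))"
proof -
  have s_shift: "j + shift \<notin> s" if "j \<in> s" for j using s_less_shift[of "j + shift"] by auto
  show "\<forall>j\<in>s. ignores indicator_s (j + shift)"
    using embed_upd[OF s_shift] by (simp add: ignores_def indicator_s_def)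
  show "\<forall>i\<in>s. ignores (indicator_group i) i \<and> (\<forall>j\<in>s. ignores (indicator_group i) (j + shift))"
    using pick embed_upd[OF s_shift] by (auto simp: ignores_def indicator_group_def embed_upd_image intro!: prod.cong)
qed

lemma mean_indicator_s: "base_prob - err \<le> G.E indicator_s"
proof -
  have "G.E indicator_s = (\<Sum>w\<in>grid. measure_pmf.prob p {f. \<forall>t\<in>{s}. f (embed w ` t) = a t}) / real (card grid)"
    unfolding indicator_s_def using joint_mean_indicator[of "{s}" "\<lambda>w t. embed w ` t" a]
      embed_dsets[OF _ s card_s] by simp
  then have "\<bar>G.E indicator_s - base_prob\<bar> \<le> \<eta>"
    unfolding base_prob_def using embed_prob_close[of _ "{s}" a]
    by (simp add: abs_mean_diff_le G.finite_G G.G_ne)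
  moreover have "\<eta> \<le> 2 ^ d * \<eta>" "0 \<le> real d / real L"
    using \<eta>_nonneg mult_right_mono[of 1 "2 ^ d" \<eta>] by simp_all
  then have "\<eta> \<le> err" using \<theta>_nonneg unfolding err_def by linarith
  ultimately show ?thesis by linarith
qed

lemma prob_box_no_collision_le:
  assumes w: "w \<in> grid" and no_collision: "\<forall>u\<in>s. w u \<noteq> w (u + shift)"
  shows "measure_pmf.prob p {f. \<forall>T\<in>Pow s. f (take_copies shift T w ` s) = a s}
    \<le> base_prob ^ 2 ^ d + 2 ^ d * \<eta> + \<theta>"
proof -
  define B where "B = (\<lambda>T. take_copies shift T w ` s) ` Pow s"
  have "measure_pmf.prob p {f. \<forall>T\<in>Pow s. f (take_copies shift T w ` s) = a s}
      = measure_pmf.prob p (\<Inter>t\<in>B. {f. f t = a s})"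
    by (rule arg_cong[where f = "measure_pmf.prob p"]) (auto simp: B_def)
  also have "\<dots> \<le> (\<Prod>t\<in>B. measure_pmf.prob p {f. f t = a s}) + \<theta>"
    using box_independent is_box_take_copies[OF w no_collision] a_s card_s
    unfolding box_independent_def B_def by blast
  also have "(\<Prod>t\<in>B. measure_pmf.prob p {f. f t = a s}) \<le> base_prob ^ 2 ^ d + 2 ^ d * \<eta>"
  proof -
    have "measure_pmf.prob p {f. f t = a s} \<le> base_prob + \<eta>" if "t \<in> B" for t
    proof -
      obtain T where T: "t = take_copies shift T w ` s" using \<open>t \<in> B\<close> unfolding B_def by auto
      have "s \<subseteq> {1..n}" "d \<le> card s" using s V card_s by auto
      then have "\<bar>measure_pmf.prob p {f. \<forall>t'\<in>{s}. f (take_copies shift T w ` t') = a s}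
          - measure_pmf.prob p {f. \<forall>t'\<in>{s}. f t' = a s}\<bar> \<le> \<eta>"
        using spreadable_strict_mono_prob[OF spreadable _ _ take_copies_strict_mono[OF w] take_copies_image[OF w],
            of "{s}" T "\<lambda>_. a s"] card_s by simp
      then show ?thesis unfolding T base_prob_def by simp
    qed
    then show ?thesis
      using prod_le_power_add[of B "\<lambda>t. measure_pmf.prob p {f. f t = a s}" base_prob \<eta>]
        base_prob_bounds \<eta>_nonneg card_take_copies_box[OF w no_collision] card_s
      by (simp add: B_def measure_pmf.prob_le_1)
  qed
  finally show ?thesis by simp
qed

lemma prob_box_le:
  assumes w: "w \<in> grid"
  shows "measure_pmf.prob p {f. \<forall>T\<in>Pow s. f (take_copies shift T w ` s) = a s}
    \<le> base_prob ^ 2 ^ d + 2 ^ d * \<eta> + \<theta> + (\<Sum>u\<in>s. if w u = w (u + shift) then 1 else 0)"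
proof (cases "\<forall>u\<in>s. w u \<noteq> w (u + shift)")
  case True
  then show ?thesis
    using prob_box_no_collision_le[OF w] sum_nonneg[of s "\<lambda>u. if w u = w (u + shift) then 1 else 0 :: real"]
    by force
next
  case False
  then obtain u where u: "u \<in> s" "w u = w (u + shift)" by auto
  have "1 \<le> (\<Sum>u\<in>s. if w u = w (u + shift) then 1 else 0 :: real)"
    using member_le_sum[of u s "\<lambda>u. if w u = w (u + shift) then 1 else 0 :: real"] u finite_s by auto
  moreover have "0 \<le> base_prob ^ 2 ^ d" "0 \<le> 2 ^ d * \<eta>" using base_prob_bounds \<eta>_nonneg by simp_all
  ultimately show ?thesis
    using measure_pmf.prob_le_1[of p "{f. \<forall>T\<in>Pow s. f (take_copies shift T w ` s) = a s}"] \<theta>_nonneg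
    by linarith
qed

lemma mean_box_prod_indicator_s: "G.E (box_prod shift s indicator_s) \<le> base_prob ^ 2 ^ card s + err"
proof -
  define c where "c = base_prob ^ 2 ^ d + 2 ^ d * \<eta> + \<theta>"
  have "box_prod shift s indicator_s = (\<lambda>\<omega> w. if \<forall>T\<in>Pow s. \<omega> (take_copies shift T w ` s) = a s then 1 else 0)"
    unfolding box_prod_def indicator_s_def embed_image_s using prod_indicator[of "Pow s"] finite_s
    by (simp add: fun_eq_iff)
  moreover have "take_copies shift T w ` s \<in> dsets {1..n} d" if "w \<in> grid" for w T
    using take_copies_image[OF that] card_s strict_mono_on_imp_inj_on[OF take_copies_strict_mono[OF that]]
    by (simp add: dsets_def card_image)
  ultimately have "G.E (box_prod shift s indicator_s)
      = (\<Sum>w\<in>grid. measure_pmf.prob p {f. \<forall>T\<in>Pow s. f (take_copies shift T w ` s) = a s}) / real (card grid)"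
    using joint_mean_indicator[of "Pow s" "\<lambda>w T. take_copies shift T w ` s" "\<lambda>_. a s"] by simp
  also have "\<dots> \<le> (\<Sum>w\<in>grid. c + (\<Sum>u\<in>s. if w u = w (u + shift) then 1 else 0)) / real (card grid)"
    unfolding c_def using prob_box_le G.card_G_pos by (intro divide_right_mono sum_mono) auto
  also have "\<dots> = c + (\<Sum>u\<in>s. \<Sum>w\<in>grid. if w u = w (u + shift) then 1 else 0) / real (card grid)"
    using G.card_G_pos by (simp add: sum.distrib sum.swap[of _ grid s] add_divide_distrib)
  also have "\<dots> = c + real d / real L"
    using G.card_G_pos card_s by (simp add: sum_grid_collisions)
  finally show ?thesis by (simp add: c_def err_def card_s add.assoc)
qed

lemma decorrelation:
  "\<bar>measure_pmf.prob p {f. \<forall>t\<in>insert s F'. f t = a t}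
      - base_prob * measure_pmf.prob p {f. \<forall>t\<in>F'. f t = a t}\<bar> \<le> box_err d err + 2 * \<eta>"
proof -
  let ?B = "\<lambda>\<omega> w. \<Prod>u\<in>s. indicator_group u \<omega> w"
  have "\<bar>G.E (\<lambda>\<omega> w. (indicator_s \<omega> w - base_prob) * ?B \<omega> w)\<bar> \<le> box_err (card s) err"
    by (rule G.box_correlation_bound)
      (use finite_s s_less_shift coords_s choices_s indicators_range indicators_ignore base_prob_bounds
        err_nonneg mean_indicator_s mean_box_prod_indicator_s in auto)
  moreover have "G.E (\<lambda>\<omega> w. (indicator_s \<omega> w - base_prob) * ?B \<omega> w)
      = G.E (\<lambda>\<omega> w. indicator_s \<omega> w * ?B \<omega> w) - base_prob * G.E ?B"
    by (simp only: left_diff_distrib G.joint_mean_diff G.joint_mean_cmult)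
  moreover have "\<bar>G.E (\<lambda>\<omega> w. indicator_s \<omega> w * ?B \<omega> w) - measure_pmf.prob p {f. \<forall>t\<in>insert s F'. f t = a t}\<bar> \<le> \<eta>"
  proof -
    have "(\<lambda>\<omega> w. indicator_s \<omega> w * ?B \<omega> w)
        = (\<lambda>\<omega> w. if \<forall>t\<in>insert s F'. \<omega> (embed w ` t) = a t then 1 else 0)"
      by (auto simp: fun_eq_iff indicator_s_def prod_indicator_group)
    then have "G.E (\<lambda>\<omega> w. indicator_s \<omega> w * ?B \<omega> w)
        = (\<Sum>w\<in>grid. measure_pmf.prob p {f. \<forall>t\<in>insert s F'. f (embed w ` t) = a t}) / real (card grid)"
      using joint_mean_indicator[of "insert s F'" "\<lambda>w t. embed w ` t" a] embed_dsets_insert by simp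
    then show ?thesis
      using embed_prob_close[of _ "insert s F'" a] by (simp add: abs_mean_diff_le G.finite_G G.G_ne)
  qed
  moreover have "\<bar>base_prob * (G.E ?B - measure_pmf.prob p {f. \<forall>t\<in>F'. f t = a t})\<bar> \<le> 1 * \<eta>"
  proof -
    have "G.E ?B = (\<Sum>w\<in>grid. measure_pmf.prob p {f. \<forall>t\<in>F'. f (embed w ` t) = a t}) / real (card grid)"
      using joint_mean_indicator[of F' "\<lambda>w t. embed w ` t" a] embed_dsets_insert
      by (simp add: prod_indicator_group)
    then have "\<bar>G.E ?B - measure_pmf.prob p {f. \<forall>t\<in>F'. f t = a t}\<bar> \<le> \<eta>"
      using embed_prob_close[of _ F' a] by (simp add: abs_mean_diff_le G.finite_G G.G_ne subset_insertI)
    then show ?thesis unfolding abs_mult using base_prob_bounds by (intro mult_mono) auto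
  qed
  ultimately show ?thesis using card_s by (simp add: abs_le_iff algebra_simps)
qed

end

lemma decorrelation_bound:
  fixes p :: "(nat set \<Rightarrow> nat) pmf" and a :: "nat set \<Rightarrow> nat"
  assumes "0 < d" "spreadable \<eta> d n p" "box_independent \<theta> S d n p" "array_valued d n p X" "finite X"
    and F: "F \<subseteq> dsets {1..n} d" "s \<in> F" "F' \<subseteq> F - {s}" "2 * card (\<Union>F) \<le> n"
    and "a s \<in> S" "0 \<le> \<eta>" "0 \<le> \<theta>"
  shows "\<bar>measure_pmf.prob p {f. \<forall>t\<in>insert s F'. f t = a t}
      - measure_pmf.prob p {f. f s = a s} * measure_pmf.prob p {f. \<forall>t\<in>F'. f t = a t}\<bar>
    \<le> box_err d (2 ^ d * \<eta> + \<theta> + real d / real (n div card (\<Union>F))) + 2 * \<eta>"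
proof -
  have V: "\<Union>F \<subseteq> {1..n}" and s: "s \<subseteq> \<Union>F" and card_s: "card s = d"
    using F by (auto simp: dsets_def)
  have "d \<le> card (\<Union>F)"
    using card_s card_mono[OF finite_subset[OF V] s] by simp
  then have "2 \<le> n div card (\<Union>F)"
    using F(4) assms(1) div_le_mono[OF F(4), of "card (\<Union>F)"] by simp
  moreover have "card (\<Union>F) * (n div card (\<Union>F)) \<le> n" by simp
  ultimately interpret decorrelation_step n "\<Union>F" s "n div card (\<Union>F)" p d \<eta> \<theta> S X F' a
    using assms V s card_s by unfold_locales (auto simp: dsets_def)
  show ?thesis using decorrelation by (simp add: base_prob_def err_def)
qed

section \<open>The independence bound\<close>

text \<open>Since \<open>card (\<Union>F) \<le> d * card F\<close>, the gap \<open>n div card (\<Union>F)\<close> of the decorrelation bound is at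
  least \<open>n div (d * k)\<close>; the \<open>max 2\<close> keeps the junk value \<open>d / 0 = 0\<close> out when \<open>d * k > n\<close>.\<close>

definition gamma_bound :: "real \<Rightarrow> real \<Rightarrow> nat \<Rightarrow> nat \<Rightarrow> nat \<Rightarrow> real" where
  "gamma_bound \<eta> \<theta> d n k =
     min 1 (real k * (box_err d (2 ^ d * \<eta> + \<theta> + real d / real (max 2 (n div (d * k)))) + 2 * \<eta>))"

lemma gamma_bound_pos: "0 < \<eta> \<Longrightarrow> 0 \<le> \<theta> \<Longrightarrow> 1 \<le> k \<Longrightarrow> 0 < gamma_bound \<eta> \<theta> d n k"
  using box_err_nonneg[of "2 ^ d * \<eta> + \<theta> + real d / real (max 2 (n div (d * k)))" d]
  by (simp add: gamma_bound_def)

lemma gamma_bound_small: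
  assumes "0 < d" "1 \<le> k" "0 < \<epsilon>"
  shows "\<exists>N \<delta>. 0 < \<delta> \<and> (\<forall>n \<eta> \<theta>. N \<le> n \<longrightarrow> 0 < \<eta> \<longrightarrow> \<eta> \<le> \<delta> \<longrightarrow> 0 < \<theta> \<longrightarrow> \<theta> \<le> \<delta> \<longrightarrow>
    gamma_bound \<eta> \<theta> d n k < \<epsilon>)"
proof -
  have k: "0 < real k" using assms by simp
  obtain \<rho> where \<rho>: "\<rho> > 0" "\<forall>x. 0 \<le> x \<longrightarrow> x \<le> \<rho> \<longrightarrow> box_err d x < \<epsilon> / (2 * real k)"
    using box_err_small[of "\<epsilon> / (2 * real k)" d] assms k by auto
  define \<delta> where "\<delta> = min (\<rho> / (3 * 2 ^ d)) (\<epsilon> / (8 * real k))"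
  define M where "M = nat (ceiling (3 * real d / \<rho>)) + 2"
  have M: "3 * real d / \<rho> \<le> real M" "2 \<le> M" unfolding M_def by linarith+
  show ?thesis
  proof (intro exI[of _ "d * k * M"] exI[of _ \<delta>] conjI allI impI)
    show "0 < \<delta>" using \<rho> assms k by (simp add: \<delta>_def)
    fix n \<eta> \<theta> assume n: "d * k * M \<le> n" and \<eta>: "0 < \<eta>" "\<eta> \<le> \<delta>" and \<theta>: "0 < \<theta>" "\<theta> \<le> \<delta>"
    have "M \<le> n div (d * k)"
      using div_le_mono[OF n, of "d * k"] assms by simp
    then have "real d / real (max 2 (n div (d * k))) \<le> real d / real M"
      using M by (intro divide_left_mono) auto
    also have "\<dots> \<le> \<rho> / 3"
      using M \<rho>(1) by (simp add: field_simps)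
    finally have gap: "real d / real (max 2 (n div (d * k))) \<le> \<rho> / 3" .
    have "2 ^ d * \<eta> \<le> \<rho> / 3" using \<eta> by (simp add: \<delta>_def field_simps)
    have "\<theta> \<le> \<rho> / (3 * 2 ^ d)" using \<theta> by (simp add: \<delta>_def)
    also have "\<dots> \<le> \<rho> / 3" using \<rho>(1) by (simp add: field_simps)
    finally have "\<theta> \<le> \<rho> / 3" .
    define x where "x = 2 ^ d * \<eta> + \<theta> + real d / real (max 2 (n div (d * k)))"
    have "x \<le> \<rho>" using gap \<open>2 ^ d * \<eta> \<le> \<rho> / 3\<close> \<open>\<theta> \<le> \<rho> / 3\<close> unfolding x_def by linarith
    moreover have "0 \<le> x" using \<eta> \<theta> by (simp add: x_def)
    ultimately have "box_err d x < \<epsilon> / (2 * real k)" using \<rho>(2) by blast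
    moreover have "\<eta> \<le> \<epsilon> / (8 * real k)" using \<eta> by (simp add: \<delta>_def)
    ultimately have "real k * (box_err d x + 2 * \<eta>) < real k * (\<epsilon> / (2 * real k) + 2 * (\<epsilon> / (8 * real k)))"
      using k by (intro mult_strict_left_mono add_less_le_mono) auto
    also have "\<dots> = 3 / 4 * \<epsilon>" using k by (simp add: field_simps)
    also have "\<dots> < \<epsilon>" using assms by simp
    finally show "gamma_bound \<eta> \<theta> d n k < \<epsilon>" by (simp add: gamma_bound_def x_def)
  qed
qed

lemma max_two_div_le_div_card_Union:
  assumes "F \<subseteq> dsets {1..n} d" "finite F" "F \<noteq> {}" "0 < d" "2 * card (\<Union>F) \<le> n"
  shows "max 2 (n div (d * card F)) \<le> n div card (\<Union>F)"
proof -
  obtain t where t: "t \<in> F" using assms(3) by auto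
  have "finite (\<Union>F)" using assms(1,2) by (auto simp: dsets_def intro: finite_subset)
  then have "d \<le> card (\<Union>F)"
    using card_mono[of "\<Union>F" t] t assms(1) by (auto simp: dsets_def)
  then have pos: "0 < card (\<Union>F)" using assms(4) by simp
  have "card (\<Union>F) \<le> sum card F" by (rule card_Union_le_sum_card)
  also have "sum card F = d * card F" using assms(1) by (simp add: dsets_def subset_iff)
  finally have "n div (d * card F) \<le> n div card (\<Union>F)" by (rule div_le_mono2[OF pos])
  moreover have "2 \<le> n div card (\<Union>F)"
    using div_le_mono[OF assms(5), of "card (\<Union>F)"] pos by simp
  ultimately show ?thesis by simp
qed

lemma gamma_independent_gamma_bound:
  fixes p :: "(nat set \<Rightarrow> nat) pmf"
  assumes "0 < d" "0 < \<eta>" "0 < \<theta>" "finite X"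
    and "array_valued d n p X" "spreadable \<eta> d n p" "box_independent \<theta> S d n p"
  shows "gamma_independent (gamma_bound \<eta> \<theta> d n) S d n p"
  unfolding gamma_independent_def
proof (intro allI impI)
  fix F :: "nat set set" and a :: "nat set \<Rightarrow> nat"
  assume F: "F \<noteq> {}" "F \<subseteq> dsets {1..n} d" "real (card (\<Union>F)) \<le> real n / 2" and a: "\<forall>s\<in>F. a s \<in> S"
  have "finite F"
    by (rule finite_subset[OF F(2) finite_subset[of _ "Pow {1..n}"]]) (auto simp: dsets_def)
  have n: "2 * card (\<Union>F) \<le> n" using F(3) by linarith
  define \<kappa> where
    "\<kappa> = box_err d (2 ^ d * \<eta> + \<theta> + real d / real (max 2 (n div (d * card F)))) + 2 * \<eta>"
  have "\<bar>measure_pmf.prob p (\<Inter>t\<in>F. {f. f t = a t}) - (\<Prod>t\<in>F. measure_pmf.prob p {f. f t = a t})\<bar>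
      \<le> real (card F) * \<kappa>"
  proof (rule prob_Inter_prod_telescope[OF \<open>finite F\<close>])
    fix s F' assume s: "s \<in> F" "F' \<subseteq> F - {s}"
    have "{f. f s = a s} \<inter> (\<Inter>t\<in>F'. {f. f t = a t}) = {f. \<forall>t\<in>insert s F'. f t = a t}"
      "(\<Inter>t\<in>F'. {f. f t = a t}) = {f. \<forall>t\<in>F'. f t = a t}" by auto
    moreover have "\<bar>measure_pmf.prob p {f. \<forall>t\<in>insert s F'. f t = a t}
        - measure_pmf.prob p {f. f s = a s} * measure_pmf.prob p {f. \<forall>t\<in>F'. f t = a t}\<bar>
      \<le> box_err d (2 ^ d * \<eta> + \<theta> + real d / real (n div card (\<Union>F))) + 2 * \<eta>"
      using a s assms by (intro decorrelation_bound[OF assms(1,6,7,5,4) F(2) s n]) auto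
    moreover have "\<dots> \<le> \<kappa>"
      unfolding \<kappa>_def using max_two_div_le_div_card_Union[OF F(2) \<open>finite F\<close> F(1) assms(1) n] assms
      by (intro add_right_mono box_err_mono add_left_mono divide_left_mono) auto
    ultimately show "\<bar>measure_pmf.prob p ({f. f s = a s} \<inter> (\<Inter>t\<in>F'. {f. f t = a t}))
        - measure_pmf.prob p {f. f s = a s} * measure_pmf.prob p (\<Inter>t\<in>F'. {f. f t = a t})\<bar> \<le> \<kappa>"
      by simp
  qed
  moreover note abs_prob_Inter_diff_prod_le_1[of p "\<lambda>t. {f. f t = a t}" F]
  ultimately show "\<bar>measure_pmf.prob p (\<Inter>s\<in>F. {f. f s = a s}) - (\<Prod>s\<in>F. measure_pmf.prob p {f. f s = a s})\<bar>
      \<le> gamma_bound \<eta> \<theta> d n (card F)"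
    unfolding gamma_bound_def \<kappa>_def by simp
qed

theorem theorem3p2:
  "\<exists>\<gamma> :: real \<Rightarrow> real \<Rightarrow> nat \<Rightarrow> nat \<Rightarrow> nat \<Rightarrow> real.
     (\<forall>\<eta> \<theta> d n k. 0 < d \<longrightarrow> 4 * d \<le> n \<longrightarrow> 0 < \<eta> \<longrightarrow> \<eta> \<le> 1 \<longrightarrow> 0 < \<theta> \<longrightarrow> \<theta> \<le> 1 \<longrightarrow>
        1 \<le> k \<longrightarrow> k \<le> (n div 2) choose d \<longrightarrow> 0 < \<gamma> \<eta> \<theta> d n k)
   \<and> (\<forall>d k. 0 < d \<longrightarrow> 1 \<le> k \<longrightarrow> (\<forall>\<epsilon>>0. \<exists>N \<delta>. 0 < \<delta> \<and>
        (\<forall>n \<eta> \<theta>. N \<le> n \<longrightarrow> 0 < \<eta> \<longrightarrow> \<eta> \<le> \<delta> \<longrightarrow> \<eta> \<le> 1 \<longrightarrow> 0 < \<theta> \<longrightarrow> \<theta> \<le> \<delta> \<longrightarrow> \<theta> \<le> 1 \<longrightarrow>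
           4 * d \<le> n \<longrightarrow> k \<le> (n div 2) choose d \<longrightarrow> \<gamma> \<eta> \<theta> d n k < \<epsilon>)))
   \<and> (\<forall>d n \<eta> \<theta> (\<X> :: nat set) S (p :: (nat set \<Rightarrow> nat) pmf).
        0 < d \<longrightarrow> 4 * d \<le> n \<longrightarrow> 0 < \<eta> \<longrightarrow> \<eta> \<le> 1 \<longrightarrow> 0 < \<theta> \<longrightarrow> \<theta> \<le> 1 \<longrightarrow>
        finite \<X> \<longrightarrow> S \<noteq> {} \<longrightarrow> S \<subseteq> \<X> \<longrightarrow>
        array_valued d n p \<X> \<longrightarrow> spreadable \<eta> d n p \<longrightarrow>
        box_independent \<theta> S d n p \<longrightarrow>
        gamma_independent (\<gamma> \<eta> \<theta> d n) S d n p)"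
proof (intro exI[of _ gamma_bound] conjI allI impI)
  fix \<eta> \<theta> :: real and d n k :: nat
  assume "0 < \<eta>" "0 < \<theta>" "1 \<le> k"
  then show "0 < gamma_bound \<eta> \<theta> d n k" by (simp add: gamma_bound_pos)
next
  fix d k :: nat and \<epsilon> :: real
  assume "0 < d" "1 \<le> k" "0 < \<epsilon>"
  then obtain N \<delta> where "0 < \<delta>"
    "\<forall>n \<eta> \<theta>. N \<le> n \<longrightarrow> 0 < \<eta> \<longrightarrow> \<eta> \<le> \<delta> \<longrightarrow> 0 < \<theta> \<longrightarrow> \<theta> \<le> \<delta> \<longrightarrow> gamma_bound \<eta> \<theta> d n k < \<epsilon>"
    using gamma_bound_small by blast
  then show "\<exists>N \<delta>. 0 < \<delta> \<and> (\<forall>n \<eta> \<theta>. N \<le> n \<longrightarrow> 0 < \<eta> \<longrightarrow> \<eta> \<le> \<delta> \<longrightarrow> \<eta> \<le> 1 \<longrightarrow> 0 < \<theta> \<longrightarrow> \<theta> \<le> \<delta> \<longrightarrow>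
      \<theta> \<le> 1 \<longrightarrow> 4 * d \<le> n \<longrightarrow> k \<le> (n div 2) choose d \<longrightarrow> gamma_bound \<eta> \<theta> d n k < \<epsilon>)"
    by blast
next
  fix d n :: nat and \<eta> \<theta> :: real and X S :: "nat set" and p :: "(nat set \<Rightarrow> nat) pmf"
  assume "0 < d" "0 < \<eta>" "0 < \<theta>" "finite X" "array_valued d n p X" "spreadable \<eta> d n p"
    "box_independent \<theta> S d n p"
  then show "gamma_independent (gamma_bound \<eta> \<theta> d n) S d n p"
    by (rule gamma_independent_gamma_bound)
qed

end
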